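(* Let $H:\mathbb R_+\to(0,1)$ be continuous and satisfy: (H1) there are constants $0<h_1<h_2<1$ with $h_1\le H_t\le h_2$ for all $t\ge0$; (H2) there are constants $D>0$, $\kappa\in(0,1]$ with $|H_t-H_s|\le D|t-s|^\kappa$ for all $t\ge s>0$. Let $Y$ be the multifractional Brownian motion with Hurst function $H$. Then for any $\delta>0$ there exists a nonnegative random variable $\xi=\xi(\delta)$ such that almost surely, for all $t>0$, \[ |Y(t)|\le (t^{h_2+\delta}\vee1)\,\xi, \] and there exist positive constants $C_1=C_1(\delta)$, $C_2=C_2(\delta)$ such that $\mathbb P(\xi>u)\le C_1e^{-C_2u^2}$ for all $u>0$.
   Context: The (harmonizable) multifractional Brownian motion with continuous functional parameter $H$ is $Y(t)=\int_{\mathbb R}\frac{e^{itu}-1}{|u|^{H_t+1/2}}\widetilde W(du)$, $t\ge0$, where $\widetilde W$ is the Fourier transform of real Gaussian white noise $W$, i.e. the unique complex-valued random measure with $\int_{\mathbb R}f(u)W(du)=\int_{\mathbb R}\widehat f(u)\widetilde W(du)$ a.s. for all $f\in L^2(\mathbb R)$. *)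

theory Defs
  imports "HOL-Probability.Probability"
begin

text \<open>Covariance of the harmonizable multifractional Brownian motion
  Y(t) = int (e^{itu}-1)/|u|^{H_t+1/2} dW~(u), normalised with the unitary Fourier
  transform, so that E[Y(t)Y(s)] = int (e^{itu}-1)(e^{-isu}-1)/|u|^{H_t+H_s+1} du,
  whose (real) value is the integral below.\<close>
definition mbm_cov :: "(real \<Rightarrow> real) \<Rightarrow> real \<Rightarrow> real \<Rightarrow> real" where
  "mbm_cov H t s =
     (LBINT u. (1 - cos (t * u) - cos (s * u) + cos ((t - s) * u)) / \<bar>u\<bar> powr (H t + H s + 1))"

text \<open>Y is (a version of) the multifractional Brownian motion with functional parameter H
  on the probability space M: a real centred Gaussian process on [0,oo) with covariance
  mbm_cov H (Gaussianity expressed via characteristic functions of all finite linear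
  combinations), whose sample paths are almost surely continuous.\<close>
definition is_mbm :: "'a measure \<Rightarrow> (real \<Rightarrow> real) \<Rightarrow> (real \<Rightarrow> 'a \<Rightarrow> real) \<Rightarrow> bool" where
  "is_mbm M H Y \<longleftrightarrow>
     prob_space M \<and>
     (\<forall>t\<ge>0. Y t \<in> borel_measurable M) \<and>
     (\<forall>S a. finite S \<longrightarrow> S \<subseteq> {0..} \<longrightarrow> (\<forall>\<theta>.
        char (distr M borel (\<lambda>\<omega>. \<Sum>t\<in>S. a t * Y t \<omega>)) \<theta> =
        complex_of_real (exp (- (\<theta>\<^sup>2 / 2) * (\<Sum>t\<in>S. \<Sum>s\<in>S. a t * a s * mbm_cov H t s))))) \<and>
     (AE \<omega> in M. continuous_on {0..} (\<lambda>t. Y t \<omega>))"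

end

theory Submission
  imports Defs
begin

(* Increments of Y are centred Gaussian, so the theorem reduces to variance bounds and chaining.
   In the spectral integral for E|Y(t) - Y(s)|^2 the integrand is |p (e^(itu) - 1) - r (e^(isu) - 1)|^2
   with p = |u|^-(H_t + 1/2) and r = |u|^-(H_s + 1/2).  The part coming from t - s is controlled by
   |t - s|, the part coming from p - r by (H_t - H_s)^2 log^2 |u|, and the logarithm is absorbed by a
   small power of |u|.  For some h2 < rho < h2 + delta this gives
   E|Y(t) - Y(s)|^2 <= K max(1,t)^(2 rho) |t - s|^(2 gamma) for |t - s| <= 1 and
   E Y(t)^2 <= K max(1,t)^(2 rho).  On each block [m, m+1], Levy's dyadic chaining with the Gaussian
   tail bound shows that |Y| exceeds u m^(h2 + delta) at some dyadic point of the block with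
   probability at most C exp(- c u^2 m^(2 (h2 + delta - rho))), which is summable in m.  Hence
   xi, the supremum of |Y(t)| / max(t^(h2 + delta), 1) over dyadic t, has a Gaussian tail and is
   almost surely finite, and path continuity extends the bound from dyadic t to all t > 0. *)

section \<open>Gaussian tails\<close>

lemma std_normal_abs_gt_le:
  assumes "0 \<le> a"
  shows "measure std_normal_distribution {z. a < \<bar>z\<bar>} \<le> sqrt 2 * exp (- a\<^sup>2 / 4)"
proof -
  have density_le: "std_normal_density z * indicator {z. a < \<bar>z\<bar>} z
      \<le> exp (- a\<^sup>2 / 4) * sqrt 2 * normal_density 0 (sqrt 2) z" for z
  proof (cases "a < \<bar>z\<bar>")
    case True
    then have "a\<^sup>2 \<le> z\<^sup>2"
      using assms by (metis abs_ge_zero abs_of_nonneg less_imp_le power2_abs power_mono)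
    then have "exp (- z\<^sup>2 / 2) \<le> exp (- a\<^sup>2 / 4) * exp (- z\<^sup>2 / 4)"
      by (simp add: exp_add[symmetric])
    moreover have "sqrt 2 * (1 / sqrt (2 * pi * (sqrt 2)\<^sup>2)) = 1 / sqrt (2 * pi)"
      by (simp add: real_sqrt_mult field_simps)
    ultimately show ?thesis
      using True unfolding std_normal_density_def normal_density_def by (auto simp: field_simps)
  qed (simp add: normal_density_nonneg)
  have "emeasure std_normal_distribution {z. a < \<bar>z\<bar>}
      = (\<integral>\<^sup>+ z. ennreal (std_normal_density z * indicator {z. a < \<bar>z\<bar>} z) \<partial>lborel)"
    by (subst emeasure_density) (auto intro!: nn_integral_cong simp: indicator_def)
  also have "\<dots> \<le> (\<integral>\<^sup>+ z. ennreal (exp (- a\<^sup>2 / 4) * sqrt 2) * ennreal (normal_density 0 (sqrt 2) z) \<partial>lborel)"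
    by (intro nn_integral_mono) (use density_le in \<open>simp add: ennreal_mult'[symmetric]\<close>)
  also have "\<dots> = ennreal (exp (- a\<^sup>2 / 4) * sqrt 2) * (\<integral>\<^sup>+ z. ennreal (normal_density 0 (sqrt 2) z) \<partial>lborel)"
    by (rule nn_integral_cmult) simp
  also have "(\<integral>\<^sup>+ z. ennreal (normal_density 0 (sqrt 2) z) \<partial>lborel) = 1"
    by (subst nn_integral_eq_integral) auto
  finally show ?thesis
    by (simp add: measure_def enn2real_leI mult.commute)
qed

lemma distr_eq_scaled_std_normal:
  assumes "prob_space M" and X: "X \<in> borel_measurable M"
    and char_X: "\<And>\<theta>. char (distr M borel X) \<theta> = complex_of_real (exp (- (\<theta>\<^sup>2 / 2) * V))"
  shows "0 \<le> V" and "distr M borel X = distr std_normal_distribution borel (\<lambda>z. sqrt V * z)"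
proof -
  interpret prob_space M by fact
  interpret N: prob_space std_normal_distribution using prob_space_normal_density by simp
  have real_distr_X: "real_distribution (distr M borel X)"
    using X by (simp add: real_distribution_def real_distribution_axioms_def prob_space_distr)
  have "norm (char (distr M borel X) 1) \<le> 1"
    by (rule real_distribution.cmod_char_le_1[OF real_distr_X])
  then show V: "0 \<le> V" using char_X[of 1] by simp
  define N' where "N' = distr std_normal_distribution borel (\<lambda>z. sqrt V * z)"
  have real_distr_N': "real_distribution N'"
    unfolding N'_def by (simp add: real_distribution_def real_distribution_axioms_def N.prob_space_distr)
  have "char N' \<theta> = char std_normal_distribution (\<theta> * sqrt V)" for \<theta>
    unfolding N'_def char_def by (subst integral_distr) (auto simp: mult_ac)
  also have "\<dots> \<theta> = complex_of_real (exp (- (\<theta>\<^sup>2 / 2) * V))" for \<theta>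
    using V by (simp add: char_std_normal_distribution power_mult_distrib field_simps)
  finally have "char N' = char (distr M borel X)" using char_X by auto
  then show "distr M borel X = N'"
    using Levy_uniqueness[OF real_distr_X real_distr_N'] by simp
qed

lemma gaussian_abs_gt_le:
  assumes "prob_space M" and X: "X \<in> borel_measurable M"
    and char_X: "\<And>\<theta>. char (distr M borel X) \<theta> = complex_of_real (exp (- (\<theta>\<^sup>2 / 2) * V))"
    and "0 < B" "V \<le> B" "0 \<le> x"
  shows "measure M {\<omega>\<in>space M. x < \<bar>X \<omega>\<bar>} \<le> sqrt 2 * exp (- x\<^sup>2 / (4 * B))"
proof -
  note V = distr_eq_scaled_std_normal[OF assms(1-3)]
  have "measure M {\<omega>\<in>space M. x < \<bar>X \<omega>\<bar>} = measure (distr M borel X) {y. x < \<bar>y\<bar>}"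
    using X by (subst measure_distr) (auto intro!: arg_cong[where f="measure M"])
  also have "\<dots> = measure std_normal_distribution {z. x < \<bar>sqrt V * z\<bar>}"
    unfolding V(2) by (subst measure_distr) (auto intro!: arg_cong[where f="measure _"])
  also have "\<dots> \<le> sqrt 2 * exp (- x\<^sup>2 / (4 * B))"
  proof (cases "V = 0")
    case False
    then have V_pos: "0 < V" using V(1) by simp
    have "{z. x < \<bar>sqrt V * z\<bar>} = {z. x / sqrt V < \<bar>z\<bar>}"
      using V_pos by (auto simp: abs_mult field_simps)
    moreover have "measure std_normal_distribution {z. x / sqrt V < \<bar>z\<bar>} \<le> sqrt 2 * exp (- (x / sqrt V)\<^sup>2 / 4)"
      by (rule std_normal_abs_gt_le) (use assms(6) V_pos in simp)
    ultimately have "measure std_normal_distribution {z. x < \<bar>sqrt V * z\<bar>} \<le> sqrt 2 * exp (- (x / sqrt V)\<^sup>2 / 4)"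
      by simp
    also have "\<dots> \<le> sqrt 2 * exp (- x\<^sup>2 / (4 * B))"
      using assms(4-6) V_pos by (simp add: power_divide frac_le)
    finally show ?thesis .
  qed (use assms(6) in simp)
  finally show ?thesis .
qed

section \<open>Elementary estimates and broken power laws\<close>

lemma one_minus_cos_le: "1 - cos y \<le> (y::real)\<^sup>2 / 2"
proof -
  have "1 - cos y = 2 * (sin (y/2))\<^sup>2"
    using cos_double_sin[of "y/2"] by simp
  moreover have "(sin (y/2))\<^sup>2 \<le> (y/2)\<^sup>2"
    by (metis abs_ge_zero abs_sin_x_le_abs_x power2_abs power_mono)
  ultimately show ?thesis by (simp add: power_divide)
qed

lemma two_minus_two_cos_le: "2 - 2 * cos y \<le> min 4 ((y::real)\<^sup>2)"
  using one_minus_cos_le[of y] cos_ge_minus_one[of y] by linarith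

lemma min_4_sq_le_powr:
  fixes y \<theta> :: real
  assumes "0 \<le> y" "0 \<le> \<theta>" "\<theta> \<le> 1"
  shows "min 4 (y\<^sup>2) \<le> 4 * y powr (2 * \<theta>)"
proof (cases "y \<le> 1")
  case True
  show ?thesis
  proof (cases "y = 0")
    case False
    have "y\<^sup>2 = y powr 2" using assms False by (simp add: powr_realpow)
    also have "\<dots> \<le> y powr (2 * \<theta>)" using assms True by (intro powr_mono') auto
    finally have "y\<^sup>2 \<le> y powr (2 * \<theta>)" .
    then show ?thesis using powr_ge_zero[of y "2*\<theta>"] by linarith
  qed simp
next
  case False
  then have "1 \<le> y powr (2 * \<theta>)" using assms by (intro ge_one_powr_ge_zero) auto
  then show ?thesis by linarith
qed

lemma abs_exp_diff_le: "\<bar>exp (a::real) - exp b\<bar> \<le> \<bar>a - b\<bar> * max (exp a) (exp b)"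
proof -
  have *: "exp x - exp y \<le> (x - y) * exp x" for x y :: real
  proof -
    have "exp x * (1 + (y - x)) \<le> exp x * exp (y - x)"
      by (simp add: exp_ge_add_one_self)
    then show ?thesis by (simp add: exp_diff algebra_simps)
  qed
  show ?thesis
    using *[of a b] *[of b a] by (cases "a \<le> b") (auto simp: abs_if max_def)
qed

lemma abs_ln_le_powr:
  fixes x \<eta> :: real
  assumes "1 \<le> x" "0 < \<eta>"
  shows "\<bar>ln x\<bar> \<le> x powr \<eta> / \<eta>"
proof -
  have "ln (x powr \<eta>) \<le> x powr \<eta> - 1" using assms by (intro ln_le_minus_one) auto
  then show ?thesis using assms by (simp add: field_simps)
qed

lemma abs_ln_le_powr_neg:
  fixes x \<eta> :: real
  assumes "0 < x" "x \<le> 1" "0 < \<eta>"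
  shows "\<bar>ln x\<bar> \<le> x powr (- \<eta>) / \<eta>"
proof -
  have "ln (x powr (- \<eta>)) \<le> x powr (- \<eta>) - 1" using assms by (intro ln_le_minus_one) auto
  then show ?thesis using assms by (simp add: field_simps)
qed

definition broken_powr :: "real \<Rightarrow> real \<Rightarrow> real \<Rightarrow> real" where
  "broken_powr p q x = (if x \<le> 1 then x powr p else x powr q)"

lemma broken_powr_nonneg [simp]: "0 \<le> broken_powr p q x"
  by (simp add: broken_powr_def)

lemma broken_powr_measurable [measurable]: "broken_powr p q \<in> borel_measurable borel"
  unfolding broken_powr_def[abs_def] by measurable

lemma powr_neg_le_broken_powr:
  assumes "0 < x" "a \<le> c" "c \<le> b"
  shows "x powr (- c) \<le> broken_powr (- b) (- a) x"
  using assms by (simp add: broken_powr_def powr_mono' powr_mono)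

lemma min_4_sq_mult_broken_powr_le:
  assumes "0 \<le> d" "0 \<le> x" "0 \<le> \<theta>" "\<theta> \<le> 1" "0 \<le> \<theta>'" "\<theta>' \<le> 1"
  shows "min 4 ((d * x)\<^sup>2) * broken_powr p q x
    \<le> 4 * (d powr (2 * \<theta>) + d powr (2 * \<theta>')) * broken_powr (2 * \<theta> + p) (2 * \<theta>' + q) x"
proof -
  have min_le: "min 4 ((d * x)\<^sup>2) * x powr r \<le> 4 * (d powr (2 * \<theta>) + d powr (2 * \<theta>')) * x powr (2 * \<alpha> + r)"
    if "\<alpha> = \<theta> \<or> \<alpha> = \<theta>'" for \<alpha> r
  proof -
    have "min 4 ((d * x)\<^sup>2) \<le> 4 * (d powr (2 * \<alpha>) * x powr (2 * \<alpha>))"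
      using min_4_sq_le_powr[of "d * x" \<alpha>] assms that by (auto simp: powr_mult)
    also have "\<dots> \<le> 4 * ((d powr (2 * \<theta>) + d powr (2 * \<theta>')) * x powr (2 * \<alpha>))"
      using that by (intro mult_left_mono mult_right_mono) auto
    finally have "min 4 ((d * x)\<^sup>2) * x powr r
        \<le> 4 * ((d powr (2 * \<theta>) + d powr (2 * \<theta>')) * x powr (2 * \<alpha>)) * x powr r"
      by (rule mult_right_mono) simp
    then show ?thesis by (simp add: powr_add algebra_simps)
  qed
  show ?thesis
    using min_le[of \<theta> p] min_le[of \<theta>' q] by (simp add: broken_powr_def)
qed

lemma ln_sq_mult_broken_powr_le:
  assumes "0 < x" "0 < \<eta>"
  shows "(ln x)\<^sup>2 * broken_powr p q x \<le> broken_powr (p - 2 * \<eta>) (q + 2 * \<eta>) x / \<eta>\<^sup>2"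
proof -
  have sq_le: "(ln x)\<^sup>2 * x powr r \<le> x powr (r + 2 * \<epsilon>) / \<eta>\<^sup>2"
    if "\<bar>ln x\<bar> \<le> x powr \<epsilon> / \<eta>" for \<epsilon> r
  proof -
    have "(ln x)\<^sup>2 \<le> (x powr \<epsilon> / \<eta>)\<^sup>2"
      using that by (metis abs_ge_zero power2_abs power_mono)
    then have "(ln x)\<^sup>2 * x powr r \<le> (x powr \<epsilon> / \<eta>)\<^sup>2 * x powr r"
      by (intro mult_right_mono) auto
    also have "\<dots> = x powr (r + 2 * \<epsilon>) / \<eta>\<^sup>2"
      using \<open>0 < x\<close> by (simp add: power_divide powr_power powr_add)
    finally show ?thesis .
  qed
  show ?thesis
  proof (cases "x \<le> 1")
    case True
    then show ?thesis
      using sq_le[of "- \<eta>" p] abs_ln_le_powr_neg[of x \<eta>] assms by (simp add: broken_powr_def)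
  next
    case False
    then show ?thesis
      using sq_le[of \<eta> q] abs_ln_le_powr[of x \<eta>] assms by (simp add: broken_powr_def)
  qed
qed

lemma nn_integral_broken_powr_abs_le:
  assumes "-1 < p" "q < -1"
  shows "(\<integral>\<^sup>+u. ennreal (broken_powr p q \<bar>u\<bar>) \<partial>lborel) \<le> ennreal (2 / (p + 1) - 2 / (q + 1))"
proof -
  let ?f = "\<lambda>x. ennreal (broken_powr p q x) * indicator {0..} x"
  have "(\<integral>\<^sup>+x. ?f x \<partial>lborel)
      \<le> (\<integral>\<^sup>+x. ennreal (x powr p) * indicator {0..1} x + ennreal (x powr q) * indicator {1..} x \<partial>lborel)"
    by (intro nn_integral_mono) (auto simp: broken_powr_def indicator_def)
  also have "\<dots> = ennreal (1 / (p + 1)) + ennreal (- 1 / (q + 1))"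
    using nn_integral_has_integral_lebesgue'[OF _ has_integral_powr_from_0[of p 1]]
      nn_integral_has_integral_lebesgue'[OF _ has_integral_powr_to_inf[of q 1]] assms
    by (subst nn_integral_add) auto
  also have "\<dots> = ennreal (1 / (p + 1) - 1 / (q + 1))"
    using assms by (subst ennreal_plus[symmetric]) (auto intro: divide_nonneg_neg)
  finally have half: "(\<integral>\<^sup>+x. ?f x \<partial>lborel) \<le> ennreal (1 / (p + 1) - 1 / (q + 1))" .
  have reflect: "(\<integral>\<^sup>+u. ?f (- u) \<partial>lborel) = (\<integral>\<^sup>+x. ?f x \<partial>lborel)"
    by (subst lborel_distr_uminus[symmetric]) (simp add: nn_integral_distr)
  have "(\<integral>\<^sup>+u. ennreal (broken_powr p q \<bar>u\<bar>) \<partial>lborel) \<le> (\<integral>\<^sup>+u. ?f u + ?f (- u) \<partial>lborel)"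
    by (intro nn_integral_mono) (auto simp: indicator_def)
  also have "\<dots> = 2 * (\<integral>\<^sup>+x. ?f x \<partial>lborel)"
    by (subst nn_integral_add) (auto simp: reflect mult_2)
  also have "\<dots> \<le> 2 * ennreal (1 / (p + 1) - 1 / (q + 1))"
    by (intro mult_left_mono half) simp
  also have "\<dots> = ennreal (2 * (1 / (p + 1) - 1 / (q + 1)))"
    by (subst ennreal_mult') auto
  finally show ?thesis by (simp add: right_diff_distrib)
qed

lemma integrable_broken_powr_abs:
  assumes "-1 < p" "q < -1"
  shows "integrable lborel (\<lambda>u. broken_powr p q \<bar>u\<bar>)"
  using nn_integral_broken_powr_abs_le[OF assms]
  by (intro integrableI_bounded) (auto simp: top.not_eq_extremum le_less_trans)

lemma integral_broken_powr_abs_le: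
  assumes "-1 < p" "q < -1"
  shows "(LBINT u. broken_powr p q \<bar>u\<bar>) \<le> 2 / (p + 1) - 2 / (q + 1)"
proof (rule integral_real_bounded)
  have "2 / (q + 1) < 0" "0 < 2 / (p + 1)"
    using assms by (simp_all add: divide_less_0_iff)
  then show "0 \<le> 2 / (p + 1) - 2 / (q + 1)" by linarith
qed (rule nn_integral_broken_powr_abs_le[OF assms])

section \<open>The spectral covariance integrand\<close>

definition mbm_cov_integrand :: "(real \<Rightarrow> real) \<Rightarrow> real \<Rightarrow> real \<Rightarrow> real \<Rightarrow> real" where
  "mbm_cov_integrand H t s u =
     (1 - cos (t * u) - cos (s * u) + cos ((t - s) * u)) / \<bar>u\<bar> powr (H t + H s + 1)"

lemma mbm_cov_eq_integral: "mbm_cov H t s = (LBINT u. mbm_cov_integrand H t s u)"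
  unfolding mbm_cov_def mbm_cov_integrand_def ..

lemma mbm_cov_integrand_measurable [measurable]: "mbm_cov_integrand H t s \<in> borel_measurable borel"
  unfolding mbm_cov_integrand_def[abs_def] by measurable

lemma mbm_cov_integrand_eq:
  "mbm_cov_integrand H t s u =
    \<bar>u\<bar> powr (- (H t + 1/2)) * \<bar>u\<bar> powr (- (H s + 1/2)) * (1 - cos (t * u) - cos (s * u) + cos ((t - s) * u))"
proof -
  have "\<bar>u\<bar> powr (H t + 1/2) * \<bar>u\<bar> powr (H s + 1/2) = \<bar>u\<bar> powr (H t + 1/2 + (H s + 1/2))"
    by (rule powr_add[symmetric])
  also have "H t + 1/2 + (H s + 1/2) = H t + H s + 1"
    by simp
  finally have sum: "\<bar>u\<bar> powr (H t + H s + 1) = \<bar>u\<bar> powr (H t + 1/2) * \<bar>u\<bar> powr (H s + 1/2)" ..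
  show ?thesis
    unfolding mbm_cov_integrand_def powr_minus sum
    by (simp only: divide_inverse inverse_mult_distrib mult.commute mult.left_commute)
qed

lemma abs_mbm_cov_integrand_le:
  "\<bar>mbm_cov_integrand H t s u\<bar>
     \<le> min 4 (((\<bar>t\<bar> + \<bar>s\<bar> + \<bar>t - s\<bar>) * \<bar>u\<bar>)\<^sup>2) / \<bar>u\<bar> powr (H t + H s + 1)"
proof -
  define A where "A y = 1 - cos (y * u)" for y
  have A: "0 \<le> A y" "A y \<le> 2" "A y \<le> (\<bar>y\<bar> * \<bar>u\<bar>)\<^sup>2" for y
  proof -
    have "(\<bar>y\<bar> * \<bar>u\<bar>)\<^sup>2 = (y * u)\<^sup>2"
      by (simp add: power_mult_distrib)
    then show "0 \<le> A y" "A y \<le> 2" "A y \<le> (\<bar>y\<bar> * \<bar>u\<bar>)\<^sup>2"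
      unfolding A_def
      using one_minus_cos_le[of "y * u"] cos_ge_minus_one[of "y * u"] cos_le_one[of "y * u"]
        zero_le_power2[of "y * u"]
      by linarith+
  qed
  have sum_sq_le: "a\<^sup>2 + b\<^sup>2 + c\<^sup>2 \<le> (a + b + c)\<^sup>2" if "0 \<le> a" "0 \<le> b" "0 \<le> c" for a b c :: real
    using that by (simp add: power2_sum)
  have "(\<bar>t\<bar> * \<bar>u\<bar>)\<^sup>2 + (\<bar>s\<bar> * \<bar>u\<bar>)\<^sup>2 + (\<bar>t - s\<bar> * \<bar>u\<bar>)\<^sup>2 \<le> ((\<bar>t\<bar> + \<bar>s\<bar> + \<bar>t - s\<bar>) * \<bar>u\<bar>)\<^sup>2"
    using sum_sq_le[of "\<bar>t\<bar> * \<bar>u\<bar>" "\<bar>s\<bar> * \<bar>u\<bar>" "\<bar>t - s\<bar> * \<bar>u\<bar>"] by (simp add: distrib_right)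
  then have "\<bar>A t + A s - A (t - s)\<bar> \<le> min 4 (((\<bar>t\<bar> + \<bar>s\<bar> + \<bar>t - s\<bar>) * \<bar>u\<bar>)\<^sup>2)"
    using A[of t] A[of s] A[of "t - s"] by (simp add: abs_le_iff)
  moreover have "mbm_cov_integrand H t s u = (A t + A s - A (t - s)) / \<bar>u\<bar> powr (H t + H s + 1)"
    by (simp add: mbm_cov_integrand_def A_def)
  ultimately show ?thesis
    by (simp add: divide_right_mono)
qed

lemma integrable_mbm_cov_integrand:
  assumes "0 < H t + H s" "H t + H s < 2"
  shows "integrable lborel (mbm_cov_integrand H t s)"
proof -
  define d where "d = \<bar>t\<bar> + \<bar>s\<bar> + \<bar>t - s\<bar>"
  define c where "c = H t + H s + 1"
  have bound_integrable: "integrable lborel (\<lambda>u. 4 * (d powr 2 + d powr 0) * broken_powr (2 - c) (- c) \<bar>u\<bar>)"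
    using assms unfolding c_def by (intro integrable_mult_right integrable_broken_powr_abs) auto
  have bound: "\<bar>mbm_cov_integrand H t s u\<bar> \<le> 4 * (d powr 2 + d powr 0) * broken_powr (2 - c) (- c) \<bar>u\<bar>" for u
  proof -
    have "\<bar>mbm_cov_integrand H t s u\<bar> \<le> min 4 ((d * \<bar>u\<bar>)\<^sup>2) / \<bar>u\<bar> powr c"
      unfolding d_def c_def by (rule abs_mbm_cov_integrand_le)
    also have "\<dots> = min 4 ((d * \<bar>u\<bar>)\<^sup>2) * broken_powr (- c) (- c) \<bar>u\<bar>"
      by (simp add: broken_powr_def powr_minus_divide)
    also have "\<dots> \<le> 4 * (d powr (2 * 1) + d powr (2 * 0)) * broken_powr (2 * 1 + - c) (2 * 0 + - c) \<bar>u\<bar>"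
      by (rule min_4_sq_mult_broken_powr_le) (auto simp: d_def)
    finally show ?thesis by simp
  qed
  show ?thesis
    by (rule Bochner_Integration.integrable_bound[OF bound_integrable]) (use bound in auto)
qed

lemma powr_diff_sq_le:
  assumes "0 < (x::real)"
  shows "(x powr a - x powr b)\<^sup>2 \<le> (a - b)\<^sup>2 * (ln x)\<^sup>2 * (max (x powr a) (x powr b))\<^sup>2"
proof -
  have exp_ln: "x powr c = exp (c * ln x)" for c
    using assms by (simp add: powr_def)
  have "\<bar>x powr a - x powr b\<bar> \<le> \<bar>a * ln x - b * ln x\<bar> * max (x powr a) (x powr b)"
    unfolding exp_ln by (rule abs_exp_diff_le)
  also have "\<bar>a * ln x - b * ln x\<bar> = \<bar>a - b\<bar> * \<bar>ln x\<bar>"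
    by (metis abs_mult left_diff_distrib)
  finally have "\<bar>x powr a - x powr b\<bar>\<^sup>2 \<le> (\<bar>a - b\<bar> * \<bar>ln x\<bar> * max (x powr a) (x powr b))\<^sup>2"
    by (rule power_mono) simp
  then show ?thesis
    by (simp only: power2_abs power_mult_distrib)
qed

lemma two_frequency_ineq:
  fixes p r \<alpha> \<beta> :: real
  shows "p\<^sup>2 * (2 - 2 * cos \<alpha>) + r\<^sup>2 * (2 - 2 * cos \<beta>) - 2 * (p * r) * (1 - cos \<alpha> - cos \<beta> + cos (\<alpha> - \<beta>))
     \<le> 2 * p\<^sup>2 * (2 - 2 * cos (\<alpha> - \<beta>)) + 2 * (p - r)\<^sup>2 * (2 - 2 * cos \<beta>)"
proof -
  \<comment> \<open>With c1 + i s1 = e^{i\<alpha>} and c2 + i s2 = e^{i\<beta>}, the left side is the squared modulus of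
      p(e^{i\<alpha>}-1) - r(e^{i\<beta>}-1) = p(e^{i\<alpha>}-e^{i\<beta>}) + (p-r)(e^{i\<beta>}-1).\<close>
  have "p\<^sup>2 * (2 - 2 * c1) + r\<^sup>2 * (2 - 2 * c2) - 2 * (p * r) * (1 - c1 - c2 + (c1 * c2 + s1 * s2))
     \<le> 2 * p\<^sup>2 * (2 - 2 * (c1 * c2 + s1 * s2)) + 2 * (p - r)\<^sup>2 * (2 - 2 * c2)"
    if "c1\<^sup>2 + s1\<^sup>2 = 1" "c2\<^sup>2 + s2\<^sup>2 = 1" for c1 s1 c2 s2 :: real
  proof -
    define X1 where "X1 = p * (c1 - c2)"
    define Y1 where "Y1 = (p - r) * (c2 - 1)"
    define X2 where "X2 = p * (s1 - s2)"
    define Y2 where "Y2 = (p - r) * s2"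
    have lhs: "p\<^sup>2 * (2 - 2 * c1) + r\<^sup>2 * (2 - 2 * c2) - 2 * (p * r) * (1 - c1 - c2 + (c1 * c2 + s1 * s2))
        = (X1 + Y1)\<^sup>2 + (X2 + Y2)\<^sup>2"
      unfolding X1_def Y1_def X2_def Y2_def using that by algebra
    have rhs: "2 * p\<^sup>2 * (2 - 2 * (c1 * c2 + s1 * s2)) + 2 * (p - r)\<^sup>2 * (2 - 2 * c2)
        = 2 * X1\<^sup>2 + 2 * Y1\<^sup>2 + 2 * X2\<^sup>2 + 2 * Y2\<^sup>2"
      unfolding X1_def Y1_def X2_def Y2_def using that by algebra
    have sq: "(X + Y)\<^sup>2 \<le> 2 * X\<^sup>2 + 2 * Y\<^sup>2" for X Y :: real
      using zero_le_power2[of "X - Y"] unfolding power2_diff power2_sum by linarith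
    show ?thesis
      unfolding lhs rhs using sq[of X1 Y1] sq[of X2 Y2] by linarith
  qed
  from this[of "cos \<alpha>" "sin \<alpha>" "cos \<beta>" "sin \<beta>"] show ?thesis
    by (simp add: cos_diff)
qed

lemma sq_powr_neg_half_le_broken_powr:
  assumes "0 < x" "h1 \<le> a" "a \<le> h2"
  shows "(x powr (- (a + 1/2)))\<^sup>2 \<le> broken_powr (- (2 * h2 + 1)) (- (2 * h1 + 1)) x"
proof -
  have "(x powr (- (a + 1/2)))\<^sup>2 = x powr (2 * (- (a + 1/2)))"
    using assms by (subst powr_power) auto
  also have "\<dots> = x powr (- (2 * a + 1))"
    by (rule arg_cong[where f="(powr) x"]) simp
  also have "\<dots> \<le> broken_powr (- (2 * h2 + 1)) (- (2 * h1 + 1)) x"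
    using assms by (intro powr_neg_le_broken_powr) auto
  finally show ?thesis .
qed

lemma sq_diff_powr_neg_half_le_broken_powr:
  assumes x: "0 < x" and a: "h1 \<le> a" "a \<le> h2" and b: "h1 \<le> b" "b \<le> h2" and "0 < \<eta>"
  shows "(x powr (- (a + 1/2)) - x powr (- (b + 1/2)))\<^sup>2
    \<le> (a - b)\<^sup>2 / \<eta>\<^sup>2 * broken_powr (- (2 * h2 + 1) - 2 * \<eta>) (- (2 * h1 + 1) + 2 * \<eta>) x"
proof -
  let ?w = "broken_powr (- (2 * h2 + 1)) (- (2 * h1 + 1)) x"
  have max_le: "(max (x powr (- (a + 1/2))) (x powr (- (b + 1/2))))\<^sup>2 \<le> ?w"
    using sq_powr_neg_half_le_broken_powr[OF x a] sq_powr_neg_half_le_broken_powr[OF x b]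
    by (simp add: max_def)
  have "(x powr (- (a + 1/2)) - x powr (- (b + 1/2)))\<^sup>2
      \<le> (a - b)\<^sup>2 * (ln x)\<^sup>2 * (max (x powr (- (a + 1/2))) (x powr (- (b + 1/2))))\<^sup>2"
    using powr_diff_sq_le[OF x, of "- (a + 1/2)" "- (b + 1/2)"] by (simp add: power2_commute)
  also have "\<dots> \<le> (a - b)\<^sup>2 * (ln x)\<^sup>2 * ?w"
    using max_le by (intro mult_left_mono) auto
  also have "\<dots> \<le> (a - b)\<^sup>2 * (broken_powr (- (2 * h2 + 1) - 2 * \<eta>) (- (2 * h1 + 1) + 2 * \<eta>) x / \<eta>\<^sup>2)"
    unfolding mult.assoc using ln_sq_mult_broken_powr_le[OF x \<open>0 < \<eta>\<close>]
    by (intro mult_left_mono) auto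
  finally show ?thesis by simp
qed

lemma mbm_cov_increment_integrand_le:
  assumes H_t: "h1 \<le> H t" "H t \<le> h2" and H_s: "h1 \<le> H s" "H s \<le> h2" and "0 < \<eta>"
  shows "mbm_cov_integrand H t t u + mbm_cov_integrand H s s u - 2 * mbm_cov_integrand H t s u
    \<le> 2 * min 4 (((t - s) * \<bar>u\<bar>)\<^sup>2) * broken_powr (- (2 * h2 + 1)) (- (2 * h1 + 1)) \<bar>u\<bar>
      + 2 * ((H t - H s)\<^sup>2 / \<eta>\<^sup>2) * min 4 ((s * \<bar>u\<bar>)\<^sup>2)
          * broken_powr (- (2 * h2 + 1) - 2 * \<eta>) (- (2 * h1 + 1) + 2 * \<eta>) \<bar>u\<bar>"
proof (cases "u = 0")
  case True
  then show ?thesis by (simp add: mbm_cov_integrand_def)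
next
  case False
  define p where "p = \<bar>u\<bar> powr (- (H t + 1/2))"
  define r where "r = \<bar>u\<bar> powr (- (H s + 1/2))"
  have cos_le: "0 \<le> 2 - 2 * cos y" "2 - 2 * cos y \<le> min 4 (y\<^sup>2)" for y :: real
    using two_minus_two_cos_le[of y] cos_le_one[of y] by auto
  have "mbm_cov_integrand H t t u + mbm_cov_integrand H s s u - 2 * mbm_cov_integrand H t s u
      = p\<^sup>2 * (2 - 2 * cos (t * u)) + r\<^sup>2 * (2 - 2 * cos (s * u))
        - 2 * (p * r) * (1 - cos (t * u) - cos (s * u) + cos (t * u - s * u))"
    by (simp add: mbm_cov_integrand_eq p_def r_def power2_eq_square left_diff_distrib)
  also have "\<dots> \<le> 2 * p\<^sup>2 * (2 - 2 * cos ((t - s) * u)) + 2 * (p - r)\<^sup>2 * (2 - 2 * cos (s * u))"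
    using two_frequency_ineq by (simp add: left_diff_distrib)
  also have "\<dots> \<le> 2 * broken_powr (- (2 * h2 + 1)) (- (2 * h1 + 1)) \<bar>u\<bar> * min 4 (((t - s) * u)\<^sup>2)
      + 2 * ((H t - H s)\<^sup>2 / \<eta>\<^sup>2 * broken_powr (- (2 * h2 + 1) - 2 * \<eta>) (- (2 * h1 + 1) + 2 * \<eta>) \<bar>u\<bar>)
          * min 4 ((s * u)\<^sup>2)"
    using sq_powr_neg_half_le_broken_powr[OF _ H_t, of "\<bar>u\<bar>"]
      sq_diff_powr_neg_half_le_broken_powr[OF _ H_t H_s \<open>0 < \<eta>\<close>, of "\<bar>u\<bar>"] False cos_le
    unfolding p_def r_def by (intro add_mono mult_mono mult_left_mono) auto
  finally show ?thesis
    by (simp add: power_mult_distrib mult_ac)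
qed

lemma mbm_cov_increment_integrand_le_broken_powr:
  assumes H_t: "h1 \<le> H t" "H t \<le> h2" and H_s: "h1 \<le> H s" "H s \<le> h2"
    and "0 < h1" "0 < \<eta>" "h2 + \<eta> < \<rho>" "\<rho> \<le> 1" "0 \<le> s" "s \<le> t"
  shows "mbm_cov_integrand H t t u + mbm_cov_integrand H s s u - 2 * mbm_cov_integrand H t s u
    \<le> 8 * ((t - s) powr (2 * \<rho>) + (t - s) powr h1) * broken_powr (2 * (\<rho> - h2) - 1) (- h1 - 1) \<bar>u\<bar>
      + 8 / \<eta>\<^sup>2 * (H t - H s)\<^sup>2 * (s powr (2 * \<rho>) + s powr h1)
          * broken_powr (2 * (\<rho> - h2 - \<eta>) - 1) (- (h1 - 2 * \<eta>) - 1) \<bar>u\<bar>"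
proof -
  have "mbm_cov_integrand H t t u + mbm_cov_integrand H s s u - 2 * mbm_cov_integrand H t s u
      \<le> 2 * (min 4 (((t - s) * \<bar>u\<bar>)\<^sup>2) * broken_powr (- (2 * h2 + 1)) (- (2 * h1 + 1)) \<bar>u\<bar>)
        + 2 * ((H t - H s)\<^sup>2 / \<eta>\<^sup>2) * (min 4 ((s * \<bar>u\<bar>)\<^sup>2)
          * broken_powr (- (2 * h2 + 1) - 2 * \<eta>) (- (2 * h1 + 1) + 2 * \<eta>) \<bar>u\<bar>)"
    using mbm_cov_increment_integrand_le[where H=H and t=t and s=s, OF H_t H_s \<open>0 < \<eta>\<close>]
    by (simp add: mult.assoc)
  also have "\<dots> \<le> 2 * (4 * ((t - s) powr (2 * \<rho>) + (t - s) powr (2 * (h1 / 2)))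
          * broken_powr (2 * \<rho> + - (2 * h2 + 1)) (2 * (h1 / 2) + - (2 * h1 + 1)) \<bar>u\<bar>)
      + 2 * ((H t - H s)\<^sup>2 / \<eta>\<^sup>2) * (4 * (s powr (2 * \<rho>) + s powr (2 * (h1 / 2)))
          * broken_powr (2 * \<rho> + (- (2 * h2 + 1) - 2 * \<eta>)) (2 * (h1 / 2) + (- (2 * h1 + 1) + 2 * \<eta>)) \<bar>u\<bar>)"
    using assms by (intro add_mono mult_left_mono min_4_sq_mult_broken_powr_le) auto
  also have "\<dots> = 8 * ((t - s) powr (2 * \<rho>) + (t - s) powr h1) * broken_powr (2 * (\<rho> - h2) - 1) (- h1 - 1) \<bar>u\<bar>
      + 8 / \<eta>\<^sup>2 * (H t - H s)\<^sup>2 * (s powr (2 * \<rho>) + s powr h1)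
          * broken_powr (2 * (\<rho> - h2 - \<eta>) - 1) (- (h1 - 2 * \<eta>) - 1) \<bar>u\<bar>"
  proof -
    have "2 * \<rho> + - (2 * h2 + 1) = 2 * (\<rho> - h2) - 1" "2 * (h1 / 2) + - (2 * h1 + 1) = - h1 - 1"
      "2 * \<rho> + (- (2 * h2 + 1) - 2 * \<eta>) = 2 * (\<rho> - h2 - \<eta>) - 1"
      "2 * (h1 / 2) + (- (2 * h1 + 1) + 2 * \<eta>) = - (h1 - 2 * \<eta>) - 1" "2 * (h1 / 2) = h1"
      by simp_all
    then show ?thesis
      by (simp only:) (simp add: algebra_simps add_divide_distrib)
  qed
  finally show ?thesis .
qed

lemma mbm_increment_var_le:
  assumes H_t: "h1 \<le> H t" "H t \<le> h2" and H_s: "h1 \<le> H s" "H s \<le> h2"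
    and \<eta>: "0 < \<eta>" "2 * \<eta> < h1" and \<rho>: "h2 + \<eta> < \<rho>" "\<rho> \<le> 1" and st: "0 \<le> s" "s \<le> t"
  shows "mbm_cov H t t + mbm_cov H s s - 2 * mbm_cov H t s
    \<le> 8 * (1 / (\<rho> - h2) + 2 / h1) * ((t - s) powr (2 * \<rho>) + (t - s) powr h1)
      + 8 / \<eta>\<^sup>2 * (1 / (\<rho> - h2 - \<eta>) + 2 / (h1 - 2 * \<eta>)) * (H t - H s)\<^sup>2 * (s powr (2 * \<rho>) + s powr h1)"
proof -
  let ?F = "mbm_cov_integrand H"
  define a where "a = 8 * ((t - s) powr (2 * \<rho>) + (t - s) powr h1)"
  define b where "b = 8 / \<eta>\<^sup>2 * (H t - H s)\<^sup>2 * (s powr (2 * \<rho>) + s powr h1)"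
  define w where "w = broken_powr (2 * (\<rho> - h2) - 1) (- h1 - 1)"
  define w' where "w' = broken_powr (2 * (\<rho> - h2 - \<eta>) - 1) (- (h1 - 2 * \<eta>) - 1)"
  have exps: "-1 < 2 * (\<rho> - h2) - 1" "- h1 - 1 < -1" "-1 < 2 * (\<rho> - h2 - \<eta>) - 1" "- (h1 - 2 * \<eta>) - 1 < -1"
    using \<eta> \<rho> by auto
  have integrable: "integrable lborel (?F x y)" if "x \<in> {s, t}" "y \<in> {s, t}" for x y
    using that H_t H_s \<eta> \<rho> by (intro integrable_mbm_cov_integrand) auto
  have integrable_w: "integrable lborel (\<lambda>u. a * w \<bar>u\<bar> + b * w' \<bar>u\<bar>)"
    unfolding w_def w'_def
    by (intro Bochner_Integration.integrable_add integrable_mult_right integrable_broken_powr_abs exps)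
  have "mbm_cov H t t + mbm_cov H s s - 2 * mbm_cov H t s = (LBINT u. ?F t t u + ?F s s u - 2 * ?F t s u)"
    using integrable by (simp add: mbm_cov_eq_integral)
  also have "\<dots> \<le> (LBINT u. a * w \<bar>u\<bar> + b * w' \<bar>u\<bar>)"
    using integrable integrable_w H_t H_s \<eta> \<rho> st unfolding a_def b_def w_def w'_def
    by (intro integral_mono mbm_cov_increment_integrand_le_broken_powr) auto
  also have "\<dots> = a * (LBINT u. w \<bar>u\<bar>) + b * (LBINT u. w' \<bar>u\<bar>)"
    unfolding w_def w'_def using exps by (simp add: integrable_broken_powr_abs)
  also have "\<dots> \<le> a * (1 / (\<rho> - h2) + 2 / h1) + b * (1 / (\<rho> - h2 - \<eta>) + 2 / (h1 - 2 * \<eta>))"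
  proof (intro add_mono mult_left_mono)
    have cancel: "2 * x - 1 + 1 = 2 * x" "- x - 1 + 1 = - x" "2 / (2 * x) = 1 / x" for x :: real
      by simp_all
    show "(LBINT u. w \<bar>u\<bar>) \<le> 1 / (\<rho> - h2) + 2 / h1"
      "(LBINT u. w' \<bar>u\<bar>) \<le> 1 / (\<rho> - h2 - \<eta>) + 2 / (h1 - 2 * \<eta>)"
      using integral_broken_powr_abs_le[OF exps(1,2)] integral_broken_powr_abs_le[OF exps(3,4)]
      unfolding w_def w'_def by (simp_all only: cancel divide_minus_right diff_minus_eq_add)
  qed (simp_all add: a_def b_def)
  finally show ?thesis
    by (simp only: a_def b_def mult_ac)
qed

section \<open>Chaining and tail tools\<close>

lemma powr_le_max_1_powr:
  fixes x a b :: real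
  assumes "0 \<le> x" "0 \<le> a" "a \<le> b"
  shows "x powr a \<le> max 1 x powr b"
proof -
  have "x powr a \<le> max 1 x powr a" using assms by (intro powr_mono2) auto
  also have "\<dots> \<le> max 1 x powr b" using assms by (intro powr_mono) auto
  finally show ?thesis .
qed

lemma dyadic_chaining:
  fixes f :: "real \<Rightarrow> real" and b :: "nat \<Rightarrow> real"
  assumes step: "\<And>n j. j < 2 ^ n \<Longrightarrow> \<bar>f (m + (real j + 1) / 2 ^ n) - f (m + real j / 2 ^ n)\<bar> \<le> b n"
    and "j \<le> 2 ^ N"
  shows "\<bar>f (m + real j / 2 ^ N) - f m\<bar> \<le> (\<Sum>n\<le>N. b n)"
  using \<open>j \<le> 2 ^ N\<close>
proof (induction N arbitrary: j)
  case 0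
  then have "j = 0 \<or> j = 1" by auto
  then show ?case using step[of 0 0] by auto
next
  case (Suc N)
  have "0 \<le> b (Suc N)" using step[of 0 "Suc N"] by (meson abs_ge_zero order.trans zero_less_numeral zero_less_power)
  then have sum_le: "(\<Sum>n\<le>N. b n) \<le> (\<Sum>n\<le>Suc N. b n)" by simp
  obtain i where "j = 2 * i \<or> j = 2 * i + 1" by (metis oddE evenE)
  then show ?case
  proof
    assume j: "j = 2 * i"
    then have "real j / 2 ^ Suc N = real i / 2 ^ N" by (simp add: field_simps)
    then show ?thesis using Suc.IH[of i] Suc.prems j sum_le by simp
  next
    assume j: "j = 2 * i + 1"
    then have i: "i < 2 ^ N" using Suc.prems by simp
    have "real (2 * i) / 2 ^ Suc N = real i / 2 ^ N" "real j = real (2 * i) + 1"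
      using j by (simp_all add: field_simps)
    then have "\<bar>f (m + real j / 2 ^ Suc N) - f (m + real i / 2 ^ N)\<bar> \<le> b (Suc N)"
      using step[of "2 * i" "Suc N"] i by simp
    moreover have "\<bar>f (m + real i / 2 ^ N) - f m\<bar> \<le> (\<Sum>n\<le>N. b n)" using Suc.IH[of i] i by simp
    ultimately show ?thesis by simp
  qed
qed

lemma exp_neg_mult_powr_le:
  fixes x y a :: real
  assumes "1 \<le> x" "0 \<le> y" "2 \<le> y * a"
  shows "exp (- y * x powr a) \<le> exp (- y) / x\<^sup>2"
proof -
  have "1 + a * ln x \<le> x powr a"
    using exp_ge_add_one_self[of "a * ln x"] assms(1) by (simp add: powr_def)
  then have "y * (1 + a * ln x) \<le> y * x powr a"
    using assms(2) by (rule mult_left_mono)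
  moreover have "2 * ln x \<le> y * a * ln x"
    using assms by (intro mult_right_mono) auto
  ultimately have "- y * x powr a \<le> - y - 2 * ln x"
    by (simp add: algebra_simps)
  then have "exp (- y * x powr a) \<le> exp (- y - 2 * ln x)"
    by simp
  also have "\<dots> = exp (- y) / exp (ln (x\<^sup>2))"
    using assms(1) by (simp add: exp_diff ln_realpow)
  also have "\<dots> = exp (- y) / x\<^sup>2"
    using assms(1) by simp
  finally show ?thesis .
qed

lemma (in prob_space) AE_ereal_finite_if_tail_tendsto_0:
  fixes X :: "'a \<Rightarrow> ereal" and f :: "nat \<Rightarrow> real"
  assumes [measurable]: "X \<in> borel_measurable M" and "f \<longlonglongrightarrow> 0"
    and tail: "\<And>n. measure M {\<omega> \<in> space M. ereal (real (Suc n)) < X \<omega>} \<le> f n"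
  shows "AE \<omega> in M. X \<omega> \<noteq> \<infinity>"
proof (rule AE_I')
  let ?N = "{\<omega> \<in> space M. X \<omega> = \<infinity>}"
  have "measure M ?N \<le> f n" for n
  proof -
    have "measure M ?N \<le> measure M {\<omega> \<in> space M. ereal (real (Suc n)) < X \<omega>}"
      by (intro finite_measure_mono) auto
    then show ?thesis using tail[of n] by linarith
  qed
  then have "measure M ?N \<le> 0"
    using \<open>f \<longlonglongrightarrow> 0\<close> by (intro tendsto_le[OF trivial_limit_sequentially _ tendsto_const]) auto
  then show "?N \<in> null_sets M"
    by (simp add: emeasure_eq_measure null_sets_def measure_le_0_iff)
qed auto

lemma tendsto_exp_neg_sq_0:
  fixes c C :: real
  assumes "0 < c" "0 \<le> C"
  shows "(\<lambda>n. C * exp (- c * (real n)\<^sup>2)) \<longlonglongrightarrow> 0"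
proof (rule tendsto_sandwich[where f="\<lambda>_. 0" and h="\<lambda>n. C * exp (- c) ^ n"])
  have "C * exp (- c * (real n)\<^sup>2) \<le> C * exp (- c) ^ n" for n
  proof -
    have "real n \<le> (real n)\<^sup>2" by (cases n) (auto simp: power2_eq_square)
    then have "exp (- c * (real n)\<^sup>2) \<le> exp (real n * (- c))" using assms by simp
    also have "\<dots> = exp (- c) ^ n" by (rule exp_of_nat_mult)
    finally show ?thesis using assms(2) by (rule mult_left_mono)
  qed
  then show "\<forall>\<^sub>F n in sequentially. C * exp (- c * (real n)\<^sup>2) \<le> C * exp (- c) ^ n"
    by simp
  show "(\<lambda>n. C * exp (- c) ^ n) \<longlonglongrightarrow> 0"
    using assms by (intro tendsto_mult_right_zero LIMSEQ_power_zero) simp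
qed (use assms in simp_all)

section \<open>Growth of a multifractional Brownian motion\<close>

lemma mbm_cov_sym: "mbm_cov H t s = mbm_cov H s t"
proof -
  have "(1 - cos (t * u) - cos (s * u) + cos ((t - s) * u)) / \<bar>u\<bar> powr (H t + H s + 1)
      = (1 - cos (s * u) - cos (t * u) + cos ((s - t) * u)) / \<bar>u\<bar> powr (H s + H t + 1)" for u
  proof -
    have "cos ((t - s) * u) = cos ((s - t) * u)"
      by (metis cos_minus minus_diff_eq mult_minus_left)
    then show ?thesis by (simp add: add_ac)
  qed
  then show ?thesis unfolding mbm_cov_def by simp
qed

lemma mbm_cov_zero_right [simp]: "mbm_cov H t 0 = 0"
  unfolding mbm_cov_def by simp

lemma is_mbmD:
  assumes "is_mbm M H Y"
  shows "prob_space M" and "\<And>t. 0 \<le> t \<Longrightarrow> Y t \<in> borel_measurable M"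
    and "\<And>S a \<theta>. finite S \<Longrightarrow> S \<subseteq> {0..} \<Longrightarrow>
        char (distr M borel (\<lambda>\<omega>. \<Sum>t\<in>S. a t * Y t \<omega>)) \<theta> =
        complex_of_real (exp (- (\<theta>\<^sup>2 / 2) * (\<Sum>t\<in>S. \<Sum>s\<in>S. a t * a s * mbm_cov H t s)))"
    and "AE \<omega> in M. continuous_on {0..} (\<lambda>t. Y t \<omega>)"
  using assms unfolding is_mbm_def by auto

lemma char_mbm_increment:
  assumes Y: "is_mbm M H Y" and "0 \<le> s" "0 \<le> t" "s \<noteq> t"
  shows "char (distr M borel (\<lambda>\<omega>. Y t \<omega> - Y s \<omega>)) \<theta> =
     complex_of_real (exp (- (\<theta>\<^sup>2 / 2) * (mbm_cov H t t + mbm_cov H s s - 2 * mbm_cov H t s)))"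
proof -
  define a where "a x = (if x = t then 1 else - 1 :: real)" for x
  have "(\<Sum>x\<in>{t, s}. a x * Y x \<omega>) = Y t \<omega> - Y s \<omega>" for \<omega>
    using assms by (simp add: a_def)
  moreover have "(\<Sum>x\<in>{t, s}. \<Sum>y\<in>{t, s}. a x * a y * mbm_cov H x y)
      = mbm_cov H t t + mbm_cov H s s - 2 * mbm_cov H t s"
    using assms by (simp add: a_def mbm_cov_sym[of H s t])
  ultimately show ?thesis
    using is_mbmD(3)[OF Y, of "{t, s}" a \<theta>] assms by simp
qed

lemma char_mbm:
  assumes "is_mbm M H Y" "0 \<le> t"
  shows "char (distr M borel (Y t)) \<theta> = complex_of_real (exp (- (\<theta>\<^sup>2 / 2) * mbm_cov H t t))"
  using is_mbmD(3)[OF assms(1), of "{t}" "\<lambda>_. 1" \<theta>] assms(2) by simp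

lemma mbm_increment_abs_gt_le:
  assumes Y: "is_mbm M H Y" and st: "0 \<le> s" "0 \<le> t"
    and "mbm_cov H t t + mbm_cov H s s - 2 * mbm_cov H t s \<le> B" "0 < B" "0 \<le> x"
  shows "measure M {\<omega>\<in>space M. x < \<bar>Y t \<omega> - Y s \<omega>\<bar>} \<le> sqrt 2 * exp (- x\<^sup>2 / (4 * B))"
proof (cases "s = t")
  case False
  show ?thesis
    by (rule gaussian_abs_gt_le[OF is_mbmD(1)[OF Y] _ char_mbm_increment[OF Y st False]])
      (use is_mbmD(2)[OF Y] st assms(4-6) in auto)
qed (use assms in simp)

lemma mbm_abs_gt_le:
  assumes Y: "is_mbm M H Y" and t: "0 \<le> t" and "mbm_cov H t t \<le> B" "0 < B" "0 \<le> x"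
  shows "measure M {\<omega>\<in>space M. x < \<bar>Y t \<omega>\<bar>} \<le> sqrt 2 * exp (- x\<^sup>2 / (4 * B))"
  by (rule gaussian_abs_gt_le[OF is_mbmD(1)[OF Y] is_mbmD(2)[OF Y t] char_mbm[OF Y t]])
    (use assms in auto)

locale mbm_growth =
  fixes H :: "real \<Rightarrow> real" and M :: "'a measure" and Y :: "real \<Rightarrow> 'a \<Rightarrow> real"
    and h1 h2 D \<kappa> \<delta> :: real
  assumes h: "0 < h1" "h1 < h2" "h2 < 1"
    and H_bounds: "\<And>t. 0 \<le> t \<Longrightarrow> h1 \<le> H t \<and> H t \<le> h2"
    and \<kappa>: "0 < \<kappa>"
    and H_Hoelder: "\<And>s t. 0 < s \<Longrightarrow> s \<le> t \<Longrightarrow> \<bar>H t - H s\<bar> \<le> D * (t - s) powr \<kappa>"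
    and Y: "is_mbm M H Y"
    and \<delta>: "0 < \<delta>"
begin

(* eta is a margin that is small against delta, h1 and 1 - h2.  Variances grow like t^(2 rho) with
   h2 < rho < h2 + delta, and an increment over a distance d <= 1 has variance O(d^(2 gamma)).
   A and B are the constants of mbm_increment_var_le. *)
definition "\<eta> = min (min \<delta> h1) (1 - h2) / 4"
definition "\<rho> = h2 + 2 * \<eta>"
definition "\<gamma> = min (h1 / 2) \<kappa>"
definition "A = 8 * (1 / (\<rho> - h2) + 2 / h1)"
definition "B = 8 / \<eta>\<^sup>2 * (1 / (\<rho> - h2 - \<eta>) + 2 / (h1 - 2 * \<eta>))"
definition "K = 2 * A + 2 * B * D\<^sup>2"
definition "L t = max 1 t powr (2 * \<rho>)"

lemma \<eta>_pos: "0 < \<eta>" and \<eta>_le: "\<eta> \<le> \<delta> / 4" "\<eta> \<le> h1 / 4" "\<eta> \<le> (1 - h2) / 4"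
  using h \<delta> by (auto simp: \<eta>_def min_def)

lemma \<rho>_bounds: "h2 + \<eta> < \<rho>" "\<rho> < h2 + \<delta>" "\<rho> \<le> 1" "h1 \<le> 2 * \<rho>"
  using \<eta>_pos \<eta>_le h by (auto simp: \<rho>_def)

lemma \<gamma>_bounds: "0 < \<gamma>" "2 * \<gamma> \<le> h1" "\<gamma> \<le> \<kappa>"
  using h \<kappa> by (auto simp: \<gamma>_def)

lemma A_B_pos: "0 < A" "0 < B"
  using \<eta>_pos \<eta>_le \<rho>_bounds h by (auto simp: A_def B_def intro!: add_pos_pos divide_pos_pos)

lemma K_pos: "0 < K"
  using A_B_pos by (simp add: K_def add_pos_nonneg)

lemma L_ge_1: "1 \<le> L t"
  unfolding L_def using \<rho>_bounds h by (intro ge_one_powr_ge_zero) auto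

lemma L_mono: "t \<le> t' \<Longrightarrow> L t \<le> L t'"
  unfolding L_def using \<rho>_bounds h by (intro powr_mono2) auto

lemma powr_sum_le_L: "0 \<le> x \<Longrightarrow> x \<le> t \<Longrightarrow> x powr (2 * \<rho>) + x powr h1 \<le> 2 * L t"
  using powr_le_max_1_powr[of x "2 * \<rho>" "2 * \<rho>"] powr_le_max_1_powr[of x h1 "2 * \<rho>"]
    L_mono[of x t] \<rho>_bounds h by (auto simp: L_def)

lemma increment_var_split_le:
  assumes "0 \<le> s" "s \<le> t"
  shows "mbm_cov H t t + mbm_cov H s s - 2 * mbm_cov H t s
    \<le> A * ((t - s) powr (2 * \<rho>) + (t - s) powr h1) + B * (H t - H s)\<^sup>2 * (s powr (2 * \<rho>) + s powr h1)"
  unfolding A_def B_def using H_bounds[of t] H_bounds[of s] assms \<eta>_pos \<eta>_le \<rho>_bounds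
  by (intro mbm_increment_var_le) auto

lemma increment_var_le:
  assumes st: "0 \<le> s" "s \<le> t" "t - s \<le> 1"
  shows "mbm_cov H t t + mbm_cov H s s - 2 * mbm_cov H t s \<le> K * L t * (t - s) powr (2 * \<gamma>)"
proof -
  define d where "d = t - s"
  have d: "0 \<le> d" "d \<le> 1" using st by (auto simp: d_def)
  have "d powr (2 * \<rho>) + d powr h1 \<le> 2 * d powr (2 * \<gamma>)"
    using d \<gamma>_bounds \<rho>_bounds powr_mono'[of "2 * \<gamma>" "2 * \<rho>" d] powr_mono'[of "2 * \<gamma>" h1 d] by auto
  also have "\<dots> \<le> 2 * L t * d powr (2 * \<gamma>)"
    using L_ge_1[of t] by (simp add: mult_right_mono)
  finally have incr: "d powr (2 * \<rho>) + d powr h1 \<le> 2 * L t * d powr (2 * \<gamma>)" .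
  have Hoelder: "(H t - H s)\<^sup>2 * (s powr (2 * \<rho>) + s powr h1) \<le> D\<^sup>2 * d powr (2 * \<gamma>) * (2 * L t)"
  proof (cases "s = 0")
    case False
    have "\<bar>H t - H s\<bar> \<le> D * d powr \<kappa>"
      using H_Hoelder[of s t] False st by (simp add: d_def)
    then have "(H t - H s)\<^sup>2 \<le> (D * d powr \<kappa>)\<^sup>2"
      by (metis abs_ge_zero power2_abs power_mono)
    also have "\<dots> = D\<^sup>2 * d powr (2 * \<kappa>)"
      by (cases "d = 0") (simp_all add: power_mult_distrib powr_power)
    also have "\<dots> \<le> D\<^sup>2 * d powr (2 * \<gamma>)"
      using d \<gamma>_bounds by (intro mult_left_mono powr_mono') auto
    finally show ?thesis
      using powr_sum_le_L[of s t] st by (intro mult_mono) auto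
  qed (use L_ge_1[of t] in simp)
  have "mbm_cov H t t + mbm_cov H s s - 2 * mbm_cov H t s
      \<le> A * (2 * L t * d powr (2 * \<gamma>)) + B * (D\<^sup>2 * d powr (2 * \<gamma>) * (2 * L t))"
    using increment_var_split_le[OF st(1,2)] A_B_pos incr Hoelder unfolding d_def[symmetric]
    by (smt (verit) mult_left_mono mult.assoc)
  then show ?thesis
    by (simp add: K_def d_def algebra_simps)
qed

lemma var_le:
  assumes "0 \<le> t"
  shows "mbm_cov H t t \<le> K * L t"
proof -
  have "mbm_cov H t t \<le> A * (t powr (2 * \<rho>) + t powr h1)"
    using increment_var_split_le[of 0 t] assms by simp
  also have "\<dots> \<le> A * (2 * L t)"
    using powr_sum_le_L[of t t] A_B_pos assms by (intro mult_left_mono) auto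
  also have "\<dots> \<le> K * L t"
    using A_B_pos L_ge_1[of t] by (simp add: K_def algebra_simps)
  finally show ?thesis .
qed

lemma prob_space: "prob_space M"
  using is_mbmD(1)[OF Y] .

lemma Y_measurable: "0 \<le> t \<Longrightarrow> Y t \<in> borel_measurable M"
  using is_mbmD(2)[OF Y] .

(* The chaining threshold at level n is proportional to sigma^n.  Its square 2^(-gamma n) decays more
   slowly than the increment variances 2^(-2 gamma n), so the level-n failure probabilities are
   summable in n. *)
definition "\<sigma> = 2 powr (- \<gamma> / 2)"
definition "geom_sum = 1 / (1 - \<sigma>)"
definition "weight t = max (t powr (h2 + \<delta>)) 1"

definition increment_event :: "real \<Rightarrow> real \<Rightarrow> nat \<Rightarrow> 'a set" where
  "increment_event m c n = (\<Union>j<2 ^ n.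
     {\<omega> \<in> space M. c * \<sigma> ^ n < \<bar>Y (m + (real j + 1) / 2 ^ n) \<omega> - Y (m + real j / 2 ^ n) \<omega>\<bar>})"

lemma \<sigma>_bounds: "0 < \<sigma>" "\<sigma> < 1"
  unfolding \<sigma>_def using \<gamma>_bounds powr_less_mono[of "- \<gamma> / 2" 0 2] by auto

lemma \<sigma>_power_sq: "(\<sigma> ^ n)\<^sup>2 = 2 powr (- \<gamma> * n)"
proof -
  have "(\<sigma> ^ n)\<^sup>2 = \<sigma> ^ (2 * n)"
    by (simp add: power_mult[symmetric] mult.commute)
  also have "\<dots> = 2 powr (real (2 * n) * (- \<gamma> / 2))"
    unfolding \<sigma>_def by (rule powr_power) simp
  finally show ?thesis
    by (simp add: algebra_simps)
qed

lemma geom_sum_ge_1: "1 \<le> geom_sum"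
  unfolding geom_sum_def using \<sigma>_bounds by (simp add: field_simps)

lemma sum_\<sigma>_power_le: "0 \<le> c \<Longrightarrow> (\<Sum>n\<le>N. c * \<sigma> ^ n) \<le> c * geom_sum"
proof -
  assume c: "0 \<le> c"
  have "(\<Sum>n\<le>N. \<sigma> ^ n) \<le> (\<Sum>n. \<sigma> ^ n)"
    using \<sigma>_bounds by (intro sum_le_suminf summable_geometric) auto
  also have "\<dots> = geom_sum" unfolding geom_sum_def using \<sigma>_bounds by (simp add: suminf_geometric)
  finally show ?thesis using c by (simp add: sum_distrib_left[symmetric] mult_left_mono)
qed

lemma weight_ge_1: "1 \<le> weight t"
  unfolding weight_def by simp

lemma weight_mono: "0 \<le> s \<Longrightarrow> s \<le> t \<Longrightarrow> weight s \<le> weight t"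
  unfolding weight_def using h \<delta> by (intro max.mono powr_mono2) auto

lemma dyadic_increment_event_sets:
  assumes "0 \<le> m"
  shows "{\<omega> \<in> space M. c * \<sigma> ^ n < \<bar>Y (m + (real j + 1) / 2 ^ n) \<omega> - Y (m + real j / 2 ^ n) \<omega>\<bar>} \<in> sets M"
proof -
  have [measurable]: "Y (m + (real j + 1) / 2 ^ n) \<in> borel_measurable M" "Y (m + real j / 2 ^ n) \<in> borel_measurable M"
    using assms by (auto intro!: Y_measurable)
  show ?thesis by measurable
qed

lemma increment_event_sets: "0 \<le> m \<Longrightarrow> increment_event m c n \<in> sets M"
  unfolding increment_event_def using dyadic_increment_event_sets by blast

lemma dyadic_increment_abs_gt_le:
  assumes m: "0 \<le> m" and c: "0 < c" and j: "j < (2::nat) ^ n"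
  shows "measure M {\<omega> \<in> space M. c * \<sigma> ^ n < \<bar>Y (m + (real j + 1) / 2 ^ n) \<omega> - Y (m + real j / 2 ^ n) \<omega>\<bar>}
     \<le> sqrt 2 * exp (- (c\<^sup>2 / (4 * (K * L (m + 1)))) * 2 powr (\<gamma> * n))"
proof -
  define s where "s = m + real j / 2 ^ n"
  define t where "t = m + (real j + 1) / 2 ^ n"
  have "real j + 1 \<le> 2 ^ n" using j
    by (metis Suc_leI of_nat_Suc of_nat_le_iff of_nat_numeral of_nat_power add.commute)
  then have st: "0 \<le> s" "s \<le> t" "t - s \<le> 1" "t \<le> m + 1"
    using m by (auto simp: s_def t_def field_simps)
  have "t - s = 1 / 2 ^ n"
    by (simp add: s_def t_def field_simps)
  also have "\<dots> = 2 powr (- real n)"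
    by (simp add: powr_minus powr_realpow divide_inverse)
  finally have d: "(t - s) powr (2 * \<gamma>) = 2 powr (- 2 * \<gamma> * n)"
    by (simp add: powr_powr algebra_simps)
  define V where "V = K * L (m + 1) * 2 powr (- 2 * \<gamma> * n)"
  have "0 < L (m + 1)" using L_ge_1[of "m + 1"] by linarith
  then have V_pos: "0 < V" unfolding V_def using K_pos by simp
  have "mbm_cov H t t + mbm_cov H s s - 2 * mbm_cov H t s \<le> K * L t * (t - s) powr (2 * \<gamma>)"
    by (rule increment_var_le[OF st(1-3)])
  also have "\<dots> \<le> V"
    unfolding V_def d using K_pos L_mono[OF st(4)] by (intro mult_right_mono) auto
  finally have "measure M {\<omega> \<in> space M. c * \<sigma> ^ n < \<bar>Y t \<omega> - Y s \<omega>\<bar>}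
      \<le> sqrt 2 * exp (- (c * \<sigma> ^ n)\<^sup>2 / (4 * V))"
    using V_pos st c \<sigma>_bounds by (intro mbm_increment_abs_gt_le[OF Y]) auto
  also have "- (c * \<sigma> ^ n)\<^sup>2 / (4 * V) = - (c\<^sup>2 / (4 * (K * L (m + 1)))) * 2 powr (\<gamma> * n)"
  proof -
    have "2 powr (- \<gamma> * n) / 2 powr (- 2 * \<gamma> * n) = 2 powr (\<gamma> * n)"
      by (simp add: powr_diff[symmetric] algebra_simps)
    then show ?thesis
      unfolding V_def by (simp add: power_mult_distrib \<sigma>_power_sq field_simps)
  qed
  finally show ?thesis unfolding s_def t_def .
qed

lemma emeasure_increment_event_le:
  assumes m: "0 \<le> m" and c: "0 < c" and y: "y = c\<^sup>2 / (4 * (K * L (m + 1)))" and y_\<gamma>: "2 \<le> y * \<gamma>"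
  shows "emeasure M (increment_event m c n) \<le> ennreal (sqrt 2 * exp (- y) * (1/2) ^ n)"
proof -
  interpret prob_space M by (rule prob_space)
  let ?A = "\<lambda>j. {\<omega> \<in> space M. c * \<sigma> ^ n < \<bar>Y (m + (real j + 1) / 2 ^ n) \<omega> - Y (m + real j / 2 ^ n) \<omega>\<bar>}"
  have y_nonneg: "0 \<le> y" unfolding y using K_pos L_ge_1[of "m + 1"] by simp
  have "emeasure M (increment_event m c n) \<le> (\<Sum>j<2 ^ n. emeasure M (?A j))"
    unfolding increment_event_def
    by (rule emeasure_subadditive_finite) (use dyadic_increment_event_sets[OF m] in auto)
  also have "\<dots> \<le> (\<Sum>j<(2::nat) ^ n. ennreal (sqrt 2 * exp (- y * 2 powr (\<gamma> * n))))"
    unfolding emeasure_eq_measure using dyadic_increment_abs_gt_le[OF m c] y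
    by (intro sum_mono ennreal_leI) simp
  also have "\<dots> = ennreal (2 ^ n * (sqrt 2 * exp (- y * 2 powr (\<gamma> * n))))"
    by (simp add: ennreal_of_nat_eq_real_of_nat ennreal_mult'[symmetric])
  also have "\<dots> \<le> ennreal (sqrt 2 * exp (- y) * (1/2) ^ n)"
  proof (rule ennreal_leI)
    have "exp (- y * 2 powr (\<gamma> * n)) = exp (- y * (2 ^ n) powr \<gamma>)"
      by (simp add: powr_realpow[symmetric] powr_powr mult.commute)
    also have "\<dots> \<le> exp (- y) / (2 ^ n)\<^sup>2"
      using y_nonneg y_\<gamma> by (intro exp_neg_mult_powr_le) auto
    finally have "2 ^ n * exp (- y * 2 powr (\<gamma> * n)) \<le> 2 ^ n * (exp (- y) / (2 ^ n)\<^sup>2)"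
      by (rule mult_left_mono) simp
    also have "\<dots> = exp (- y) * (1/2) ^ n"
      by (simp add: power2_eq_square power_one_over field_simps)
    finally show "2 ^ n * (sqrt 2 * exp (- y * 2 powr (\<gamma> * n))) \<le> sqrt 2 * exp (- y) * (1/2) ^ n"
      by (simp add: algebra_simps)
  qed
  finally show ?thesis .
qed

lemma emeasure_UN_increment_event_le:
  assumes "0 \<le> m" "0 < c" "y = c\<^sup>2 / (4 * (K * L (m + 1)))" "2 \<le> y * \<gamma>"
  shows "emeasure M (\<Union>n. increment_event m c n) \<le> ennreal (2 * sqrt 2 * exp (- y))"
proof -
  have "emeasure M (\<Union>n. increment_event m c n) \<le> (\<Sum>n. emeasure M (increment_event m c n))"
    by (rule emeasure_subadditive_countably) (use increment_event_sets[OF assms(1)] in auto)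
  also have "\<dots> \<le> (\<Sum>n. ennreal (sqrt 2 * exp (- y) * (1/2) ^ n))"
    by (intro suminf_le emeasure_increment_event_le[OF assms]) auto
  also have "\<dots> = ennreal (\<Sum>n. sqrt 2 * exp (- y) * (1/2) ^ n)"
    by (rule suminf_ennreal2) (auto intro!: summable_mult summable_geometric)
  also have "(\<Sum>n. sqrt 2 * exp (- y) * (1/2::real) ^ n) = 2 * sqrt 2 * exp (- y)"
    by (subst suminf_mult) (auto simp: suminf_geometric)
  finally show ?thesis .
qed

definition bad_block :: "nat \<Rightarrow> real \<Rightarrow> 'a set" where
  "bad_block m u = {\<omega> \<in> space M. u * weight m / 2 < \<bar>Y m \<omega>\<bar>}
     \<union> (\<Union>n. increment_event m (u * weight m / (2 * geom_sum)) n)"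

lemma bad_block_sets: "bad_block m u \<in> sets M"
proof -
  have [measurable]: "Y (real m) \<in> borel_measurable M" by (rule Y_measurable) simp
  show ?thesis
    unfolding bad_block_def using increment_event_sets[of "real m"] by auto
qed

lemma abs_Y_le_outside_bad_block:
  assumes \<omega>: "\<omega> \<in> space M" "\<omega> \<notin> bad_block m u" and u: "0 < u" and j: "j \<le> 2 ^ N"
  shows "\<bar>Y (real m + real j / 2 ^ N) \<omega>\<bar> \<le> u * weight m"
proof -
  define c where "c = u * weight m / (2 * geom_sum)"
  have c: "0 \<le> c" unfolding c_def using u weight_ge_1[of m] geom_sum_ge_1 by simp
  have "\<bar>Y (real m + (real j' + 1) / 2 ^ n) \<omega> - Y (real m + real j' / 2 ^ n) \<omega>\<bar> \<le> c * \<sigma> ^ n"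
    if "j' < 2 ^ n" for n j'
    using \<omega> that unfolding bad_block_def increment_event_def c_def by (auto simp: not_less)
  then have "\<bar>Y (real m + real j / 2 ^ N) \<omega> - Y (real m) \<omega>\<bar> \<le> (\<Sum>n\<le>N. c * \<sigma> ^ n)"
    using dyadic_chaining[where f="\<lambda>t. Y t \<omega>", OF _ j] by simp
  also have "\<dots> \<le> c * geom_sum" by (rule sum_\<sigma>_power_le[OF c])
  also have "\<dots> = u * weight m / 2" unfolding c_def using geom_sum_ge_1 by simp
  finally have "\<bar>Y (real m + real j / 2 ^ N) \<omega> - Y (real m) \<omega>\<bar> \<le> u * weight m / 2" .
  moreover have "\<bar>Y (real m) \<omega>\<bar> \<le> u * weight m / 2"
    using \<omega> unfolding bad_block_def by auto
  ultimately show ?thesis by linarith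
qed

lemma emeasure_block_start_le:
  assumes u: "0 < u" and z: "z = u\<^sup>2 * ((weight m)\<^sup>2 / L (real m + 1)) / (16 * geom_sum\<^sup>2 * K)"
  shows "emeasure M {\<omega> \<in> space M. u * weight m / 2 < \<bar>Y (real m) \<omega>\<bar>} \<le> ennreal (sqrt 2 * exp (- z))"
proof -
  interpret prob_space M by (rule prob_space)
  have L_pos: "0 < L (real m)" using L_ge_1[of "real m"] by linarith
  have "z = (u * weight m)\<^sup>2 / (16 * (geom_sum\<^sup>2 * K * L (real m + 1)))"
    unfolding z by (simp add: power_mult_distrib field_simps)
  also have "\<dots> \<le> (u * weight m)\<^sup>2 / (16 * (1 * K * L (real m)))"
    using K_pos L_pos L_mono[of "real m" "real m + 1"] geom_sum_ge_1
    by (intro divide_left_mono mult_left_mono mult_mono) (auto simp: one_le_power)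
  also have "\<dots> = (u * weight m / 2)\<^sup>2 / (4 * (K * L (real m)))"
    by (simp add: power_mult_distrib field_simps)
  finally have z_le: "z \<le> (u * weight m / 2)\<^sup>2 / (4 * (K * L (real m)))" .
  have "measure M {\<omega> \<in> space M. u * weight m / 2 < \<bar>Y (real m) \<omega>\<bar>}
      \<le> sqrt 2 * exp (- (u * weight m / 2)\<^sup>2 / (4 * (K * L (real m))))"
    using u weight_ge_1[of m] K_pos L_pos var_le[of "real m"]
    by (intro mbm_abs_gt_le[OF Y]) auto
  also have "\<dots> \<le> sqrt 2 * exp (- z)"
    using z_le by simp
  finally show ?thesis
    unfolding emeasure_eq_measure by (rule ennreal_leI)
qed

lemma emeasure_bad_block_le:
  assumes u: "0 < u" and z: "z = u\<^sup>2 * ((weight m)\<^sup>2 / L (real m + 1)) / (16 * geom_sum\<^sup>2 * K)"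
    and z_\<gamma>: "2 \<le> z * \<gamma>"
  shows "emeasure M (bad_block m u) \<le> ennreal (3 * sqrt 2 * exp (- z))"
proof -
  have [measurable]: "Y (real m) \<in> borel_measurable M" by (rule Y_measurable) simp
  have "z = (u * weight m / (2 * geom_sum))\<^sup>2 / (4 * (K * L (real m + 1)))"
    unfolding z by (simp add: power_mult_distrib field_simps)
  then have chain: "emeasure M (\<Union>n. increment_event m (u * weight m / (2 * geom_sum)) n)
      \<le> ennreal (2 * sqrt 2 * exp (- z))"
    using u weight_ge_1[of m] geom_sum_ge_1 z_\<gamma> by (intro emeasure_UN_increment_event_le) auto
  have "emeasure M (bad_block m u) \<le> emeasure M {\<omega> \<in> space M. u * weight m / 2 < \<bar>Y (real m) \<omega>\<bar>}
      + emeasure M (\<Union>n. increment_event m (u * weight m / (2 * geom_sum)) n)"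
    unfolding bad_block_def by (rule emeasure_subadditive) (use increment_event_sets[of "real m"] in auto)
  also have "\<dots> \<le> ennreal (sqrt 2 * exp (- z)) + ennreal (2 * sqrt 2 * exp (- z))"
    by (intro add_mono emeasure_block_start_le[OF u z] chain)
  also have "\<dots> = ennreal (3 * sqrt 2 * exp (- z))"
    by (subst ennreal_plus[symmetric]) (auto simp: algebra_simps)
  finally show ?thesis .
qed

definition "\<beta> = h2 + \<delta> - \<rho>"
definition "inv_sq_sum = (\<Sum>m. inverse (real (Suc m) ^ 2))"

lemma \<beta>_pos: "0 < \<beta>"
  unfolding \<beta>_def using \<rho>_bounds by simp

lemma summable_inv_sq: "summable (\<lambda>m. inverse (real (Suc m) ^ 2))"
proof -
  have "summable (\<lambda>n. inverse (real n ^ 2))" by (rule inverse_power_summable) simp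
  then show ?thesis by (subst summable_Suc_iff[where f="\<lambda>n. inverse (real n ^ 2)"])
qed

lemma weight_sq_div_L_ge: "max 1 (real m) powr (2 * \<beta>) / 4 \<le> (weight m)\<^sup>2 / L (real m + 1)"
proof (cases "m = 0")
  case True
  then show ?thesis by (simp add: weight_def L_def)
next
  case False
  then have m: "1 \<le> real m" by simp
  have "weight m = real m powr (h2 + \<delta>)"
    unfolding weight_def using m h \<delta> by (intro max_absorb1 ge_one_powr_ge_zero) auto
  then have weight_sq: "(weight m)\<^sup>2 = real m powr (2 * (h2 + \<delta>))"
    using m by (simp add: powr_power)
  have "L (real m + 1) = (real m + 1) powr (2 * \<rho>)" unfolding L_def using m by simp
  also have "\<dots> \<le> (2 * real m) powr (2 * \<rho>)" using m \<rho>_bounds h by (intro powr_mono2) auto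
  also have "\<dots> = 2 powr (2 * \<rho>) * real m powr (2 * \<rho>)" by (rule powr_mult)
  also have "\<dots> \<le> 4 * real m powr (2 * \<rho>)"
    using powr_mono[of "2 * \<rho>" 2 2] \<rho>_bounds by (intro mult_right_mono) auto
  finally have L_le: "L (real m + 1) \<le> 4 * real m powr (2 * \<rho>)" .
  have pos: "0 < real m powr (2 * \<rho>)" using m by simp
  have "max 1 (real m) powr (2 * \<beta>) / 4 = real m powr (2 * (h2 + \<delta>)) / (4 * real m powr (2 * \<rho>))"
    using m pos by (simp add: max_absorb2 \<beta>_def powr_diff[symmetric] algebra_simps)
  also have "\<dots> \<le> (weight m)\<^sup>2 / L (real m + 1)"
    unfolding weight_sq using L_le L_ge_1[of "real m + 1"] pos by (intro divide_left_mono) auto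
  finally show ?thesis .
qed

lemma exp_le_inverse_sq:
  assumes v: "0 \<le> v" "1 \<le> \<beta> * v" and z: "v * max 1 (real m) powr (2 * \<beta>) \<le> z"
  shows "exp (- z) \<le> exp (- v) * (4 * inverse (real (Suc m) ^ 2))"
proof -
  define x where "x = max 1 (real m)"
  have x: "1 \<le> x" unfolding x_def by simp
  have "exp (- z) \<le> exp (- v * x powr (2 * \<beta>))"
    using z unfolding x_def by simp
  also have "\<dots> \<le> exp (- v) / x\<^sup>2"
    using x v by (intro exp_neg_mult_powr_le) (auto simp: algebra_simps)
  also have "\<dots> \<le> exp (- v) * (4 * inverse (real (Suc m) ^ 2))"
  proof -
    have "real (Suc m) ^ 2 \<le> (2 * x) ^ 2" unfolding x_def by (intro power_mono) auto
    then have "inverse (x\<^sup>2) \<le> 4 * inverse (real (Suc m) ^ 2)"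
      using x by (simp add: field_simps)
    then show ?thesis by (simp add: divide_inverse)
  qed
  finally show ?thesis .
qed

lemma emeasure_bad_block_le_inverse_sq:
  assumes u: "0 < u" and v: "v = u\<^sup>2 / (64 * geom_sum\<^sup>2 * K)" and v_\<gamma>: "2 \<le> v * \<gamma>" and v_\<beta>: "1 \<le> \<beta> * v"
  shows "emeasure M (bad_block m u) \<le> ennreal (12 * sqrt 2 * exp (- v) * inverse (real (Suc m) ^ 2))"
proof -
  have v_nonneg: "0 \<le> v" unfolding v using K_pos by simp
  define z where "z = u\<^sup>2 * ((weight m)\<^sup>2 / L (real m + 1)) / (16 * geom_sum\<^sup>2 * K)"
  have "v * max 1 (real m) powr (2 * \<beta>) = u\<^sup>2 * (max 1 (real m) powr (2 * \<beta>) / 4) / (16 * geom_sum\<^sup>2 * K)"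
    unfolding v by (simp add: field_simps)
  also have "\<dots> \<le> z" unfolding z_def using weight_sq_div_L_ge[of m] K_pos
    by (intro divide_right_mono mult_left_mono) auto
  finally have z_ge: "v * max 1 (real m) powr (2 * \<beta>) \<le> z" .
  have "v \<le> v * max 1 (real m) powr (2 * \<beta>)"
    using v_nonneg \<beta>_pos by (simp add: mult_le_cancel_left1 ge_one_powr_ge_zero)
  then have z_\<gamma>: "2 \<le> z * \<gamma>"
    using z_ge v_\<gamma> \<gamma>_bounds by (smt (verit) mult_right_mono)
  have "emeasure M (bad_block m u) \<le> ennreal (3 * sqrt 2 * exp (- z))"
    by (rule emeasure_bad_block_le[OF u z_def z_\<gamma>])
  also have "\<dots> \<le> ennreal (12 * sqrt 2 * exp (- v) * inverse (real (Suc m) ^ 2))"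
    using exp_le_inverse_sq[OF v_nonneg v_\<beta> z_ge] by (intro ennreal_leI) (simp add: mult_ac)
  finally show ?thesis .
qed

lemma emeasure_UN_bad_block_le:
  assumes "0 < u" "v = u\<^sup>2 / (64 * geom_sum\<^sup>2 * K)" "2 \<le> v * \<gamma>" "1 \<le> \<beta> * v"
  shows "emeasure M (\<Union>m. bad_block m u) \<le> ennreal (12 * sqrt 2 * inv_sq_sum * exp (- v))"
proof -
  have summable: "summable (\<lambda>m. 12 * sqrt 2 * exp (- v) * inverse (real (Suc m) ^ 2))"
    by (intro summable_mult summable_inv_sq)
  have "emeasure M (\<Union>m. bad_block m u) \<le> (\<Sum>m. emeasure M (bad_block m u))"
    by (rule emeasure_subadditive_countably) (use bad_block_sets in auto)
  also have "\<dots> \<le> (\<Sum>m. ennreal (12 * sqrt 2 * exp (- v) * inverse (real (Suc m) ^ 2)))"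
    by (intro suminf_le emeasure_bad_block_le_inverse_sq[OF assms]) auto
  also have "\<dots> = ennreal (\<Sum>m. 12 * sqrt 2 * exp (- v) * inverse (real (Suc m) ^ 2))"
    by (rule suminf_ennreal2) (use summable in auto)
  also have "(\<Sum>m. 12 * sqrt 2 * exp (- v) * inverse (real (Suc m) ^ 2)) = 12 * sqrt 2 * exp (- v) * inv_sq_sum"
    unfolding inv_sq_sum_def by (rule suminf_mult[OF summable_inv_sq])
  finally show ?thesis by (simp add: mult_ac)
qed

definition dyadic :: "nat \<times> nat \<Rightarrow> real" where
  "dyadic p = real (snd p) / 2 ^ fst p"

definition dyadic_sup :: "'a \<Rightarrow> ereal" where
  "dyadic_sup \<omega> = (SUP p. ereal (\<bar>Y (dyadic p) \<omega>\<bar> / weight (dyadic p)))"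

lemma dyadic_nonneg: "0 \<le> dyadic p"
  unfolding dyadic_def by simp

lemma dyadic_sup_measurable [measurable]: "dyadic_sup \<in> borel_measurable M"
proof -
  have [measurable]: "Y (dyadic p) \<in> borel_measurable M" for p
    using Y_measurable dyadic_nonneg by auto
  show ?thesis unfolding dyadic_sup_def by measurable
qed

lemma dyadic_sup_nonneg: "0 \<le> dyadic_sup \<omega>"
proof -
  have "ereal 0 \<le> ereal (\<bar>Y (dyadic (0, 0)) \<omega>\<bar> / weight (dyadic (0, 0)))"
    using weight_ge_1[of "dyadic (0, 0)"] by simp
  also have "\<dots> \<le> dyadic_sup \<omega>" unfolding dyadic_sup_def by (rule SUP_upper) simp
  finally show ?thesis by (simp add: zero_ereal_def)
qed

lemma dyadic_sup_gt_subset: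
  assumes u: "0 < u"
  shows "{\<omega> \<in> space M. ereal u < dyadic_sup \<omega>} \<subseteq> (\<Union>m. bad_block m u)"
proof
  fix \<omega> assume \<omega>: "\<omega> \<in> {\<omega> \<in> space M. ereal u < dyadic_sup \<omega>}"
  then obtain N k where p: "u < \<bar>Y (dyadic (N, k)) \<omega>\<bar> / weight (dyadic (N, k))"
    unfolding dyadic_sup_def by (auto simp: less_SUP_iff)
  define m where "m = k div 2 ^ N"
  define j where "j = k mod 2 ^ N"
  have "j \<le> 2 ^ N" unfolding j_def by (simp add: less_imp_le_nat)
  moreover have "k = m * 2 ^ N + j"
    unfolding m_def j_def by (rule div_mult_mod_eq[symmetric])
  then have dyadic_eq: "dyadic (N, k) = real m + real j / 2 ^ N"
    unfolding dyadic_def by (simp add: field_simps)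
  ultimately have "\<omega> \<notin> bad_block m u \<Longrightarrow> \<bar>Y (dyadic (N, k)) \<omega>\<bar> \<le> u * weight (dyadic (N, k))"
    using \<omega> u abs_Y_le_outside_bad_block[of \<omega> m u j N]
      weight_mono[of "real m" "dyadic (N, k)"] by (auto intro: order.trans)
  then show "\<omega> \<in> (\<Union>m. bad_block m u)"
    using p weight_ge_1[of "dyadic (N, k)"] by (auto simp: divide_le_eq not_le[symmetric])
qed

definition "tail_rate = 1 / (64 * geom_sum\<^sup>2 * K)"
definition "tail_const = max (12 * sqrt 2 * inv_sq_sum) (exp (max (2 / \<gamma>) (1 / \<beta>)))"

lemma tail_rate_pos: "0 < tail_rate"
  unfolding tail_rate_def using K_pos geom_sum_ge_1 by simp

lemma tail_const_pos: "0 < tail_const"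
  unfolding tail_const_def by (auto simp: less_max_iff_disj)

lemma measure_dyadic_sup_gt_le:
  assumes u: "0 < u"
  shows "measure M {\<omega> \<in> space M. ereal u < dyadic_sup \<omega>} \<le> tail_const * exp (- tail_rate * u\<^sup>2)"
proof -
  interpret prob_space M by (rule prob_space)
  define v where "v = tail_rate * u\<^sup>2"
  define T where "T = max (2 / \<gamma>) (1 / \<beta>)"
  show ?thesis
  proof (cases "T \<le> v")
    case True
    then have v_\<gamma>: "2 \<le> v * \<gamma>" and v_\<beta>: "1 \<le> \<beta> * v"
      using \<gamma>_bounds \<beta>_pos by (auto simp: T_def field_simps)
    have "emeasure M {\<omega> \<in> space M. ereal u < dyadic_sup \<omega>} \<le> emeasure M (\<Union>m. bad_block m u)"
      by (rule emeasure_mono[OF dyadic_sup_gt_subset[OF u]]) (use bad_block_sets in auto)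
    also have "\<dots> \<le> ennreal (12 * sqrt 2 * inv_sq_sum * exp (- v))"
      using u v_\<gamma> v_\<beta> by (intro emeasure_UN_bad_block_le) (auto simp: v_def tail_rate_def)
    also have "\<dots> \<le> ennreal (tail_const * exp (- tail_rate * u\<^sup>2))"
      unfolding v_def tail_const_def by (intro ennreal_leI mult_right_mono) auto
    finally show ?thesis
      using tail_const_pos by (simp add: emeasure_eq_measure ennreal_le_iff)
  next
    \<comment> \<open>For small u the right-hand side is at least 1.\<close>
    case False
    then have "1 \<le> exp (T - v)"
      by simp
    also have "\<dots> = exp T * exp (- tail_rate * u\<^sup>2)"
      by (simp add: v_def exp_diff exp_minus field_simps)
    also have "\<dots> \<le> tail_const * exp (- tail_rate * u\<^sup>2)"
      unfolding tail_const_def T_def by (intro mult_right_mono) auto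
    finally show ?thesis
      using prob_le_1 by (rule order.trans[rotated])
  qed
qed

lemma AE_dyadic_sup_finite: "AE \<omega> in M. dyadic_sup \<omega> \<noteq> \<infinity>"
proof (rule prob_space.AE_ereal_finite_if_tail_tendsto_0[OF prob_space dyadic_sup_measurable])
  show "(\<lambda>n. tail_const * exp (- tail_rate * (real (Suc n))\<^sup>2)) \<longlonglongrightarrow> 0"
    using LIMSEQ_Suc[OF tendsto_exp_neg_sq_0[OF tail_rate_pos, of tail_const]] tail_const_pos by simp
qed (rule measure_dyadic_sup_gt_le, simp)

lemma dyadic_floor_tendsto:
  assumes "0 \<le> t"
  shows "(\<lambda>N. dyadic (N, nat \<lfloor>t * 2 ^ N\<rfloor>)) \<longlonglongrightarrow> t"
proof (rule tendsto_sandwich[where f="\<lambda>N. t - inverse (2 ^ N)" and h="\<lambda>N. t"])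
  have eq: "dyadic (N, nat \<lfloor>t * 2 ^ N\<rfloor>) = of_int \<lfloor>t * 2 ^ N\<rfloor> / 2 ^ N" for N :: nat
    using assms by (simp add: of_nat_nat dyadic_def)
  have "t - inverse (2 ^ N) \<le> dyadic (N, nat \<lfloor>t * 2 ^ N\<rfloor>)" for N :: nat
  proof -
    have "t - inverse (2 ^ N) = (t * 2 ^ N - 1) / 2 ^ N" by (simp add: field_simps)
    also have "\<dots> \<le> of_int \<lfloor>t * 2 ^ N\<rfloor> / 2 ^ N"
      by (intro divide_right_mono) (linarith, simp)
    finally show ?thesis unfolding eq .
  qed
  then show "\<forall>\<^sub>F N in sequentially. t - inverse (2 ^ N) \<le> dyadic (N, nat \<lfloor>t * 2 ^ N\<rfloor>)"
    by simp
  have "of_int \<lfloor>t * 2 ^ N\<rfloor> \<le> t * 2 ^ N" for N :: nat by linarith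
  then show "\<forall>\<^sub>F N in sequentially. dyadic (N, nat \<lfloor>t * 2 ^ N\<rfloor>) \<le> t"
    by (simp add: eq field_simps)
  show "(\<lambda>N. t - inverse ((2::real) ^ N)) \<longlonglongrightarrow> t"
    using tendsto_diff[OF tendsto_const LIMSEQ_inverse_realpow_zero[of 2]] by simp
qed simp

lemma continuous_on_weight: "continuous_on {0..} weight"
  unfolding weight_def[abs_def] using h \<delta>
  by (intro continuous_on_max continuous_on_const continuous_on_powr' continuous_on_id) auto

lemma abs_Y_le_weight_dyadic_sup:
  assumes finite: "dyadic_sup \<omega> \<noteq> \<infinity>" and cont: "continuous_on {0..} (\<lambda>t. Y t \<omega>)" and t: "0 \<le> t"
  shows "\<bar>Y t \<omega>\<bar> \<le> weight t * real_of_ereal (dyadic_sup \<omega>)"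
proof -
  define x where "x = real_of_ereal (dyadic_sup \<omega>)"
  have "dyadic_sup \<omega> = ereal x"
    unfolding x_def using finite dyadic_sup_nonneg[of \<omega>] by (cases "dyadic_sup \<omega>") auto
  then have "\<bar>Y (dyadic p) \<omega>\<bar> / weight (dyadic p) \<le> x" for p
    using SUP_upper[of p UNIV "\<lambda>p. ereal (\<bar>Y (dyadic p) \<omega>\<bar> / weight (dyadic p))"]
    unfolding dyadic_sup_def by simp
  then have dyadic_le: "\<bar>Y (dyadic p) \<omega>\<bar> \<le> weight (dyadic p) * x" for p
    using weight_ge_1[of "dyadic p"] by (simp add: divide_le_eq mult.commute)
  define t\<^sub>N where "t\<^sub>N N = dyadic (N, nat \<lfloor>t * 2 ^ N\<rfloor>)" for N
  have t\<^sub>N: "t\<^sub>N \<longlonglongrightarrow> t" "\<And>N. t\<^sub>N N \<in> {0..}"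
    unfolding t\<^sub>N_def using dyadic_floor_tendsto[OF t] dyadic_nonneg by auto
  have Y_lim: "(\<lambda>N. \<bar>Y (t\<^sub>N N) \<omega>\<bar>) \<longlonglongrightarrow> \<bar>Y t \<omega>\<bar>"
    by (intro tendsto_rabs continuous_on_tendsto_compose[OF cont t\<^sub>N(1)]) (use t t\<^sub>N(2) in auto)
  have weight_lim: "(\<lambda>N. weight (t\<^sub>N N) * x) \<longlonglongrightarrow> weight t * x"
    by (intro tendsto_mult_right continuous_on_tendsto_compose[OF continuous_on_weight t\<^sub>N(1)])
      (use t t\<^sub>N(2) in auto)
  show ?thesis
    unfolding x_def[symmetric]
    by (rule tendsto_le[OF trivial_limit_sequentially weight_lim Y_lim]) (use dyadic_le t\<^sub>N_def in auto)
qed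

theorem growth_bound:
  "\<exists>\<xi>. \<xi> \<in> borel_measurable M \<and> (\<forall>\<omega>\<in>space M. 0 \<le> \<xi> \<omega>) \<and>
     (AE \<omega> in M. \<forall>t>0. \<bar>Y t \<omega>\<bar> \<le> max (t powr (h2 + \<delta>)) 1 * \<xi> \<omega>) \<and>
     (\<exists>C1>0. \<exists>C2>0. \<forall>u>0. measure M {\<omega>\<in>space M. \<xi> \<omega> > u} \<le> C1 * exp (- C2 * u\<^sup>2))"
proof (intro exI conjI)
  let ?\<xi> = "\<lambda>\<omega>. real_of_ereal (dyadic_sup \<omega>)"
  show "?\<xi> \<in> borel_measurable M" by measurable
  show "\<forall>\<omega>\<in>space M. 0 \<le> ?\<xi> \<omega>"
    using dyadic_sup_nonneg by (auto intro: real_of_ereal_pos)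
  show "AE \<omega> in M. \<forall>t>0. \<bar>Y t \<omega>\<bar> \<le> max (t powr (h2 + \<delta>)) 1 * ?\<xi> \<omega>"
    using AE_dyadic_sup_finite is_mbmD(4)[OF Y]
    by eventually_elim (auto simp: weight_def[symmetric] intro: abs_Y_le_weight_dyadic_sup)
  show "\<forall>u>0. measure M {\<omega>\<in>space M. ?\<xi> \<omega> > u} \<le> tail_const * exp (- tail_rate * u\<^sup>2)"
  proof (intro allI impI)
    fix u :: real assume u: "0 < u"
    interpret prob_space M by (rule prob_space)
    have "{\<omega>\<in>space M. ?\<xi> \<omega> > u} \<subseteq> {\<omega> \<in> space M. ereal u < dyadic_sup \<omega>}"
    proof safe
      fix \<omega> assume "u < ?\<xi> \<omega>"
      then show "ereal u < dyadic_sup \<omega>"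
        using u dyadic_sup_nonneg[of \<omega>] by (cases "dyadic_sup \<omega>") auto
    qed
    then have "measure M {\<omega>\<in>space M. ?\<xi> \<omega> > u} \<le> measure M {\<omega> \<in> space M. ereal u < dyadic_sup \<omega>}"
      by (intro finite_measure_mono) measurable
    also have "\<dots> \<le> tail_const * exp (- tail_rate * u\<^sup>2)"
      by (rule measure_dyadic_sup_gt_le[OF u])
    finally show "measure M {\<omega>\<in>space M. ?\<xi> \<omega> > u} \<le> tail_const * exp (- tail_rate * u\<^sup>2)" .
  qed
qed (fact tail_const_pos tail_rate_pos)+

end

theorem theorem6:
  fixes H :: "real \<Rightarrow> real" and M :: "'a measure" and Y :: "real \<Rightarrow> 'a \<Rightarrow> real"
    and h1 h2 D \<kappa> :: real
  assumes H_cont: "continuous_on {0..} H"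
    and H_range: "\<forall>t\<ge>0. 0 < H t \<and> H t < 1"
    and H1: "0 < h1" "h1 < h2" "h2 < 1" "\<forall>t\<ge>0. h1 \<le> H t \<and> H t \<le> h2"
    and H2: "D > 0" "0 < \<kappa>" "\<kappa> \<le> 1"
            "\<forall>s t. 0 < s \<and> s \<le> t \<longrightarrow> \<bar>H t - H s\<bar> \<le> D * (t - s) powr \<kappa>"
    and Y: "is_mbm M H Y"
  shows "\<forall>\<delta>>0. \<exists>\<xi>. \<xi> \<in> borel_measurable M \<and> (\<forall>\<omega>\<in>space M. 0 \<le> \<xi> \<omega>) \<and>
           (AE \<omega> in M. \<forall>t>0. \<bar>Y t \<omega>\<bar> \<le> max (t powr (h2 + \<delta>)) 1 * \<xi> \<omega>) \<and>
           (\<exists>C1>0. \<exists>C2>0. \<forall>u>0.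
              measure M {\<omega>\<in>space M. \<xi> \<omega> > u} \<le> C1 * exp (- C2 * u\<^sup>2))"
proof (intro allI impI mbm_growth.growth_bound)
  fix \<delta> :: real
  assume "0 < \<delta>"
  then show "mbm_growth H M Y h1 h2 D \<kappa> \<delta>"
    using H1 H2 Y by unfold_locales auto
qed

end
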